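(* Let $(\mathcal K,[\cdot,\cdot])$ be a Krein space and let $T$ be a closed, densely defined linear operator in $\mathcal K$ such that $\rho(T^{[*]}T)\neq\emptyset$ and $\rho(TT^{[*]})\neq\emptyset$. If $0\in\rho(T^{[*]}T)\cap\sigma(TT^{[*]})$, then $0$ is a pole of order one of the resolvent $\lambda\mapsto(TT^{[*]}-\lambda)^{-1}$.
   Context: $T^{[*]}$ is the Krein space adjoint of $T$; products have natural domains. $\rho(S)$ is the set of $\lambda\in\mathbb C$ with $S-\lambda$ bijective from $\operatorname{dom}S$ onto $\mathcal K$ with bounded inverse, $\sigma(S)=\mathbb C\setminus\rho(S)$. *)

theory Defs
  imports Complex_Main
begin

text \<open>
  A Krein space is modelled abstractly: a type 'a with addition (ab_group_add),
  a complex scalar multiplication sc, a Hermitian sesquilinear form kf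
  (linear in the first, antilinear in the second argument), and a fundamental
  decomposition K = Kp [+] Km, with Kp, Km mutually kf-orthogonal and
  (Kp, kf), (Km, -kf) Hilbert spaces.  The topology is the one of the
  associated Hilbert norm (independent of the fundamental decomposition).
\<close>

definition cvs :: "(complex \<Rightarrow> 'a::ab_group_add \<Rightarrow> 'a) \<Rightarrow> bool" where
  "cvs sc \<longleftrightarrow>
     (\<forall>a x y. sc a (x + y) = sc a x + sc a y) \<and>
     (\<forall>a b x. sc (a + b) x = sc a x + sc b x) \<and>
     (\<forall>a b x. sc a (sc b x) = sc (a * b) x) \<and>
     (\<forall>x. sc 1 x = x)"

definition csubspace :: "(complex \<Rightarrow> 'a::ab_group_add \<Rightarrow> 'a) \<Rightarrow> 'a set \<Rightarrow> bool" where
  "csubspace sc S \<longleftrightarrow> 0 \<in> S \<and> (\<forall>x\<in>S. \<forall>y\<in>S. x + y \<in> S) \<and> (\<forall>a. \<forall>x\<in>S. sc a x \<in> S)"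

definition hermitian_form :: "(complex \<Rightarrow> 'a::ab_group_add \<Rightarrow> 'a) \<Rightarrow> ('a \<Rightarrow> 'a \<Rightarrow> complex) \<Rightarrow> bool" where
  "hermitian_form sc kf \<longleftrightarrow>
     (\<forall>x y z. kf (x + y) z = kf x z + kf y z) \<and>
     (\<forall>a x z. kf (sc a x) z = a * kf x z) \<and>
     (\<forall>x y. kf y x = cnj (kf x y))"

definition pcomp :: "'a::ab_group_add set \<Rightarrow> 'a set \<Rightarrow> 'a \<Rightarrow> 'a" where
  "pcomp Kp Km x = (THE p. p \<in> Kp \<and> x - p \<in> Km)"

definition mcomp :: "'a::ab_group_add set \<Rightarrow> 'a set \<Rightarrow> 'a \<Rightarrow> 'a" where
  "mcomp Kp Km x = x - pcomp Kp Km x"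

definition knorm :: "('a::ab_group_add \<Rightarrow> 'a \<Rightarrow> complex) \<Rightarrow> 'a set \<Rightarrow> 'a set \<Rightarrow> 'a \<Rightarrow> real" where
  "knorm kf Kp Km x =
     sqrt (Re (kf (pcomp Kp Km x) (pcomp Kp Km x)) - Re (kf (mcomp Kp Km x) (mcomp Kp Km x)))"

definition kconv :: "('a::ab_group_add \<Rightarrow> 'a \<Rightarrow> complex) \<Rightarrow> 'a set \<Rightarrow> 'a set \<Rightarrow> (nat \<Rightarrow> 'a) \<Rightarrow> 'a \<Rightarrow> bool" where
  "kconv kf Kp Km X l \<longleftrightarrow> (\<lambda>n. knorm kf Kp Km (X n - l)) \<longlonglongrightarrow> 0"

definition kcauchy :: "('a::ab_group_add \<Rightarrow> 'a \<Rightarrow> complex) \<Rightarrow> 'a set \<Rightarrow> 'a set \<Rightarrow> (nat \<Rightarrow> 'a) \<Rightarrow> bool" where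
  "kcauchy kf Kp Km X \<longleftrightarrow>
     (\<forall>e>0. \<exists>N. \<forall>m\<ge>N. \<forall>n\<ge>N. knorm kf Kp Km (X m - X n) < e)"

definition krein_space ::
  "(complex \<Rightarrow> 'a::ab_group_add \<Rightarrow> 'a) \<Rightarrow> ('a \<Rightarrow> 'a \<Rightarrow> complex) \<Rightarrow> 'a set \<Rightarrow> 'a set \<Rightarrow> bool" where
  "krein_space sc kf Kp Km \<longleftrightarrow>
     cvs sc \<and> hermitian_form sc kf \<and>
     csubspace sc Kp \<and> csubspace sc Km \<and>
     Kp \<inter> Km = {0} \<and> (\<forall>x. \<exists>p\<in>Kp. \<exists>m\<in>Km. x = p + m) \<and>
     (\<forall>x\<in>Kp. \<forall>y\<in>Km. kf x y = 0) \<and>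
     (\<forall>x\<in>Kp. x \<noteq> 0 \<longrightarrow> Re (kf x x) > 0) \<and>
     (\<forall>x\<in>Km. x \<noteq> 0 \<longrightarrow> Re (kf x x) < 0) \<and>
     (\<forall>X. (\<forall>n. X n \<in> Kp) \<and> kcauchy kf Kp Km X \<longrightarrow> (\<exists>l\<in>Kp. kconv kf Kp Km X l)) \<and>
     (\<forall>X. (\<forall>n. X n \<in> Km) \<and> kcauchy kf Kp Km X \<longrightarrow> (\<exists>l\<in>Km. kconv kf Kp Km X l))"

text \<open>Operators in K: a domain together with an action (only relevant on the domain).\<close>
type_synonym 'a lop = "'a set \<times> ('a \<Rightarrow> 'a)"

definition linear_op :: "(complex \<Rightarrow> 'a::ab_group_add \<Rightarrow> 'a) \<Rightarrow> 'a lop \<Rightarrow> bool" where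
  "linear_op sc T \<longleftrightarrow> csubspace sc (fst T) \<and>
     (\<forall>x\<in>fst T. \<forall>y\<in>fst T. snd T (x + y) = snd T x + snd T y) \<and>
     (\<forall>a. \<forall>x\<in>fst T. snd T (sc a x) = sc a (snd T x))"

definition kdense :: "('a::ab_group_add \<Rightarrow> 'a \<Rightarrow> complex) \<Rightarrow> 'a set \<Rightarrow> 'a set \<Rightarrow> 'a set \<Rightarrow> bool" where
  "kdense kf Kp Km D \<longleftrightarrow> (\<forall>x. \<exists>X. (\<forall>n. X n \<in> D) \<and> kconv kf Kp Km X x)"

definition closed_op :: "('a::ab_group_add \<Rightarrow> 'a \<Rightarrow> complex) \<Rightarrow> 'a set \<Rightarrow> 'a set \<Rightarrow> 'a lop \<Rightarrow> bool" where
  "closed_op kf Kp Km T \<longleftrightarrow>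
     (\<forall>X x y. (\<forall>n. X n \<in> fst T) \<and> kconv kf Kp Km X x \<and> kconv kf Kp Km (\<lambda>n. snd T (X n)) y
        \<longrightarrow> x \<in> fst T \<and> snd T x = y)"

definition kadj :: "('a \<Rightarrow> 'a \<Rightarrow> complex) \<Rightarrow> 'a lop \<Rightarrow> 'a lop" where
  "kadj kf T =
     ({y. \<exists>z. \<forall>x\<in>fst T. kf (snd T x) y = kf x z},
      (\<lambda>y. THE z. \<forall>x\<in>fst T. kf (snd T x) y = kf x z))"

definition lop_comp :: "'a lop \<Rightarrow> 'a lop \<Rightarrow> 'a lop" where
  "lop_comp S T = ({x \<in> fst T. snd T x \<in> fst S}, (\<lambda>x. snd S (snd T x)))"

definition shift_op :: "(complex \<Rightarrow> 'a::ab_group_add \<Rightarrow> 'a) \<Rightarrow> 'a lop \<Rightarrow> complex \<Rightarrow> 'a \<Rightarrow> 'a" where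
  "shift_op sc S l = (\<lambda>x. snd S x - sc l x)"

definition resolvent :: "(complex \<Rightarrow> 'a::ab_group_add \<Rightarrow> 'a) \<Rightarrow> 'a lop \<Rightarrow> complex \<Rightarrow> 'a \<Rightarrow> 'a" where
  "resolvent sc S l = inv_into (fst S) (shift_op sc S l)"

definition rho :: "(complex \<Rightarrow> 'a::ab_group_add \<Rightarrow> 'a) \<Rightarrow> ('a \<Rightarrow> 'a \<Rightarrow> complex) \<Rightarrow> 'a set \<Rightarrow> 'a set
                    \<Rightarrow> 'a lop \<Rightarrow> complex set" where
  "rho sc kf Kp Km S =
     {l. bij_betw (shift_op sc S l) (fst S) UNIV \<and>
         (\<exists>C. \<forall>y. knorm kf Kp Km (resolvent sc S l y) \<le> C * knorm kf Kp Km y)}"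

definition spec :: "(complex \<Rightarrow> 'a::ab_group_add \<Rightarrow> 'a) \<Rightarrow> ('a \<Rightarrow> 'a \<Rightarrow> complex) \<Rightarrow> 'a set \<Rightarrow> 'a set
                    \<Rightarrow> 'a lop \<Rightarrow> complex set" where
  "spec sc kf Kp Km S = - rho sc kf Kp Km S"

definition bounded_op :: "(complex \<Rightarrow> 'a::ab_group_add \<Rightarrow> 'a) \<Rightarrow> ('a \<Rightarrow> 'a \<Rightarrow> complex) \<Rightarrow> 'a set \<Rightarrow> 'a set
                    \<Rightarrow> ('a \<Rightarrow> 'a) \<Rightarrow> bool" where
  "bounded_op sc kf Kp Km A \<longleftrightarrow>
     (\<forall>x y. A (x + y) = A x + A y) \<and> (\<forall>a x. A (sc a x) = sc a (A x)) \<and>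
     (\<exists>C. \<forall>x. knorm kf Kp Km (A x) \<le> C * knorm kf Kp Km x)"

definition opnorm :: "('a::ab_group_add \<Rightarrow> 'a \<Rightarrow> complex) \<Rightarrow> 'a set \<Rightarrow> 'a set \<Rightarrow> ('a \<Rightarrow> 'a) \<Rightarrow> real" where
  "opnorm kf Kp Km A = Sup {knorm kf Kp Km (A x) | x. knorm kf Kp Km x \<le> 1}"

text \<open>
  mu is a pole of order one of the resolvent l \<mapsto> (S - l)^{-1}: on a punctured
  disc around mu all points are in rho(S) and the resolvent has a Laurent expansion
  (convergent in operator norm) with bounded coefficients A n, whose principal part
  consists of the single term (l - mu)^{-1} A(-1) with A(-1) \<noteq> 0.
\<close>
definition pole_order_one :: "(complex \<Rightarrow> 'a::ab_group_add \<Rightarrow> 'a) \<Rightarrow> ('a \<Rightarrow> 'a \<Rightarrow> complex) \<Rightarrow> 'a set \<Rightarrow> 'a set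
                    \<Rightarrow> 'a lop \<Rightarrow> complex \<Rightarrow> bool" where
  "pole_order_one sc kf Kp Km S mu \<longleftrightarrow>
     (\<exists>r>0. \<exists>A :: int \<Rightarrow> 'a \<Rightarrow> 'a.
        (\<forall>n. bounded_op sc kf Kp Km (A n)) \<and> A (-1) \<noteq> (\<lambda>_. 0) \<and>
        (\<forall>l. 0 < cmod (l - mu) \<and> cmod (l - mu) < r \<longrightarrow>
           l \<in> rho sc kf Kp Km S \<and>
           (\<lambda>N. opnorm kf Kp Km
               (\<lambda>y. resolvent sc S l y - (sc (inverse (l - mu)) (A (-1) y)
                     + (\<Sum>k<N. sc ((l - mu) ^ k) (A (int k) y))))) \<longlonglongrightarrow> 0))"

end

theory Submission
  imports Defs
begin

(*
  Setting: B = T^[*]T with 0 in rho(B), S = TT^[*] with some mu in rho(S) but 0 in sigma(S).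
  Put G = B^{-1}, R = (S - mu)^{-1}, C = T G and D = T^[*] R.  G and R are bounded by
  assumption; C and D are everywhere defined and closed, hence bounded by the closed graph
  theorem.  For 0 < |l| < 1/|G| let w = (I - l G)^{-1} D y (Neumann series); then

      (S - l)^{-1} y = l^{-1} (mu R y + (l - mu) C w),

  which is verified directly with the defining property of the Krein adjoint.  Expanding
  w = sum_k l^k G^k D y gives the Laurent expansion
      (S - l)^{-1} = l^{-1} A_{-1} + sum_k l^k C G^k (I - mu G) D,   A_{-1} = mu (R - C D),
  with a geometrically small remainder in operator norm.  Finally A_{-1} <> 0: otherwise
  C (I - mu G) D would be a bounded inverse of S, contradicting 0 in sigma(S).
*)

locale krein =
  fixes sc :: "complex \<Rightarrow> 'a::ab_group_add \<Rightarrow> 'a"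
    and kf :: "'a \<Rightarrow> 'a \<Rightarrow> complex"
    and Kp Km :: "'a set"
  assumes krein: "krein_space sc kf Kp Km"
begin

lemma cvs: "cvs sc" using krein unfolding krein_space_def by blast
lemma herm: "hermitian_form sc kf" using krein unfolding krein_space_def by blast
lemma sub_Kp: "csubspace sc Kp" using krein unfolding krein_space_def by blast
lemma sub_Km: "csubspace sc Km" using krein unfolding krein_space_def by blast
lemma Kp_Km_inter: "Kp \<inter> Km = {0}" using krein unfolding krein_space_def by blast
lemma Kp_Km_decomp: "\<exists>p\<in>Kp. \<exists>m\<in>Km. x = p + m" using krein unfolding krein_space_def by blast
lemma Kp_Km_orth: "x \<in> Kp \<Longrightarrow> y \<in> Km \<Longrightarrow> kf x y = 0" using krein unfolding krein_space_def by blast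
lemma Kp_pos: "x \<in> Kp \<Longrightarrow> x \<noteq> 0 \<Longrightarrow> Re (kf x x) > 0" using krein unfolding krein_space_def by blast
lemma Km_neg: "x \<in> Km \<Longrightarrow> x \<noteq> 0 \<Longrightarrow> Re (kf x x) < 0" using krein unfolding krein_space_def by blast
lemma Kp_complete: "(\<forall>n. X n \<in> Kp) \<Longrightarrow> kcauchy kf Kp Km X \<Longrightarrow> \<exists>l\<in>Kp. kconv kf Kp Km X l"
  using krein unfolding krein_space_def by blast
lemma Km_complete: "(\<forall>n. X n \<in> Km) \<Longrightarrow> kcauchy kf Kp Km X \<Longrightarrow> \<exists>l\<in>Km. kconv kf Kp Km X l"
  using krein unfolding krein_space_def by blast

lemma sc_add_r[simp]: "sc a (x + y) = sc a x + sc a y" using cvs unfolding cvs_def by blast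
lemma sc_add_l: "sc (a + b) x = sc a x + sc b x" using cvs unfolding cvs_def by blast
lemma sc_assoc[simp]: "sc a (sc b x) = sc (a * b) x" using cvs unfolding cvs_def by blast
lemma sc_one[simp]: "sc 1 x = x" using cvs unfolding cvs_def by blast
lemma sc_zero_l[simp]: "sc 0 x = 0"
  using sc_add_l[of 0 0 x] by simp
lemma sc_zero_r[simp]: "sc a 0 = 0"
  using sc_add_r[of a 0 0] by simp
lemma sc_neg_r: "sc a (- x) = - sc a x"
  using sc_add_r[of a x "- x"] by (simp add: add_eq_0_iff)
lemma sc_diff_r: "sc a (x - y) = sc a x - sc a y"
  using sc_add_r[of a x "-y"] sc_neg_r by simp
lemma sc_neg_l: "sc (- a) x = - sc a x"
  using sc_add_l[of a "-a" x] by (simp add: add_eq_0_iff)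
lemma sc_m1: "sc (-1) x = - x" using sc_neg_l[of 1 x] by simp
lemma sc_sum: "sc a (sum f A) = (\<Sum>i\<in>A. sc a (f i))"
  by (induction A rule: infinite_finite_induct) auto
lemma sc_eq0: "c \<noteq> 0 \<Longrightarrow> sc c x = 0 \<Longrightarrow> x = 0"
  by (metis sc_assoc sc_one sc_zero_r left_inverse)

lemma csub_0: "csubspace sc S \<Longrightarrow> 0 \<in> S" unfolding csubspace_def by blast
lemma csub_add: "csubspace sc S \<Longrightarrow> x \<in> S \<Longrightarrow> y \<in> S \<Longrightarrow> x + y \<in> S" unfolding csubspace_def by blast
lemma csub_sc: "csubspace sc S \<Longrightarrow> x \<in> S \<Longrightarrow> sc a x \<in> S" unfolding csubspace_def by blast
lemma csub_neg: "csubspace sc S \<Longrightarrow> x \<in> S \<Longrightarrow> - x \<in> S"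
  using csub_sc[of S x "-1"] sc_m1 by simp
lemma csub_diff: "csubspace sc S \<Longrightarrow> x \<in> S \<Longrightarrow> y \<in> S \<Longrightarrow> x - y \<in> S"
  using csub_add[of S x "-y"] csub_neg by simp

lemma kf_add_l: "kf (x + y) z = kf x z + kf y z" using herm unfolding hermitian_form_def by blast
lemma kf_sc_l: "kf (sc a x) z = a * kf x z" using herm unfolding hermitian_form_def by blast
lemma kf_cnj: "kf y x = cnj (kf x y)" using herm unfolding hermitian_form_def by blast
lemma kf_add_r: "kf z (x + y) = kf z x + kf z y"
  by (metis kf_cnj kf_add_l complex_cnj_add)
lemma kf_sc_r: "kf z (sc a x) = cnj a * kf z x"
  by (metis kf_cnj kf_sc_l complex_cnj_mult)
lemma kf_0_l[simp]: "kf 0 z = 0" using kf_sc_l[of 0 0 z] by simp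
lemma kf_0_r[simp]: "kf z 0 = 0" using kf_sc_r[of z 0 0] by simp
lemma kf_neg_l: "kf (- x) z = - kf x z" using kf_sc_l[of "-1" x z] sc_m1 by simp
lemma kf_neg_r: "kf z (- x) = - kf z x" using kf_sc_r[of z "-1" x] sc_m1 by simp
lemma kf_diff_r: "kf z (x - y) = kf z x - kf z y" using kf_add_r[of z x "-y"] kf_neg_r by simp

abbreviation "pc \<equiv> pcomp Kp Km"
abbreviation "mc \<equiv> mcomp Kp Km"
abbreviation "nm \<equiv> knorm kf Kp Km"

lemma decomp_unique:
  assumes "p \<in> Kp" "q \<in> Km" "p' \<in> Kp" "q' \<in> Km" "p + q = p' + q'"
  shows "p = p' \<and> q = q'"
proof -
  have eq: "p - p' = q' - q" using assms(5) by (simp add: algebra_simps)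
  moreover have "p - p' \<in> Kp" using assms csub_diff sub_Kp by blast
  moreover have "q' - q \<in> Km" using assms csub_diff sub_Km by blast
  ultimately have "q' - q \<in> Kp \<inter> Km" by simp
  then have "q' - q = 0" using Kp_Km_inter by blast
  then show ?thesis using assms(5) eq by simp
qed

lemma pcomp_char: assumes "p \<in> Kp" "q \<in> Km" shows "pc (p + q) = p"
  unfolding pcomp_def
proof (rule the_equality)
  show "p \<in> Kp \<and> p + q - p \<in> Km" using assms by simp
next
  fix p' assume "p' \<in> Kp \<and> p + q - p' \<in> Km"
  then show "p' = p" using decomp_unique[of p q p' "p + q - p'"] assms by auto
qed

lemma mcomp_char: assumes "p \<in> Kp" "q \<in> Km" shows "mc (p + q) = q"
  using pcomp_char[OF assms] unfolding mcomp_def by simp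

lemma pc_in: "pc x \<in> Kp" and mc_in: "mc x \<in> Km" and pc_mc_sum: "pc x + mc x = x"
proof -
  obtain p q where pq: "p \<in> Kp" "q \<in> Km" "x = p + q" using Kp_Km_decomp by blast
  show "pc x \<in> Kp" "mc x \<in> Km" "pc x + mc x = x"
    using pcomp_char[OF pq(1,2)] mcomp_char[OF pq(1,2)] pq by simp_all
qed

lemma pc_add: "pc (x + y) = pc x + pc y"
proof -
  have "x + y = (pc x + pc y) + (mc x + mc y)"
    using pc_mc_sum[of x] pc_mc_sum[of y] by (simp add: algebra_simps)
  then show ?thesis
    using pcomp_char[of "pc x + pc y" "mc x + mc y"] pc_in mc_in csub_add sub_Kp sub_Km by metis
qed
lemma mc_add: "mc (x + y) = mc x + mc y"
  unfolding mcomp_def using pc_add by (simp add: algebra_simps)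
lemma pc_sc: "pc (sc a x) = sc a (pc x)"
proof -
  have "sc a x = sc a (pc x) + sc a (mc x)" using pc_mc_sum[of x] by (metis sc_add_r)
  then show ?thesis
    using pcomp_char[of "sc a (pc x)" "sc a (mc x)"] pc_in mc_in csub_sc sub_Kp sub_Km by metis
qed
lemma mc_sc: "mc (sc a x) = sc a (mc x)"
  unfolding mcomp_def using pc_sc by (simp add: sc_diff_r)
lemma pc_neg: "pc (- x) = - pc x" using pc_sc[of "-1" x] sc_m1 by simp
lemma mc_neg: "mc (- x) = - mc x" using mc_sc[of "-1" x] sc_m1 by simp
lemma pc_diff: "pc (x - y) = pc x - pc y" using pc_add[of x "-y"] pc_neg by simp
lemma mc_diff: "mc (x - y) = mc x - mc y" using mc_add[of x "-y"] mc_neg by simp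
lemma pc_pc: "pc (pc x) = pc x" using pcomp_char[of "pc x" 0] pc_in csub_0 sub_Km by simp
lemma mc_pc: "mc (pc x) = 0" using mcomp_char[of "pc x" 0] pc_in csub_0 sub_Km by simp
lemma pc_mc: "pc (mc x) = 0" using pcomp_char[of 0 "mc x"] mc_in csub_0 sub_Kp by simp
lemma mc_mc: "mc (mc x) = mc x" using mcomp_char[of 0 "mc x"] mc_in csub_0 sub_Kp by simp

definition fsym :: "'a \<Rightarrow> 'a" where "fsym x = pc x - mc x"
definition hip :: "'a \<Rightarrow> 'a \<Rightarrow> complex" where "hip x y = kf (pc x) (pc y) - kf (mc x) (mc y)"
definition hq :: "'a \<Rightarrow> real" where "hq x = Re (hip x x)"

lemma pc_fsym: "pc (fsym x) = pc x" unfolding fsym_def by (simp add: pc_diff pc_pc pc_mc)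
lemma mc_fsym: "mc (fsym x) = - mc x" unfolding fsym_def by (simp add: mc_diff mc_pc mc_mc)

lemma hip_add_l: "hip (x + y) z = hip x z + hip y z"
  unfolding hip_def by (simp add: pc_add mc_add kf_add_l)
lemma hip_sc_l: "hip (sc a x) z = a * hip x z"
  unfolding hip_def by (simp add: pc_sc mc_sc kf_sc_l right_diff_distrib)
lemma hip_cnj: "hip y x = cnj (hip x y)"
  unfolding hip_def by (metis kf_cnj complex_cnj_diff)
lemma hip_add_r: "hip z (x + y) = hip z x + hip z y"
  by (metis hip_cnj hip_add_l complex_cnj_add)
lemma hip_sc_r: "hip z (sc a x) = cnj a * hip z x"
  by (metis hip_cnj hip_sc_l complex_cnj_mult)

lemma kf_decomp: "kf x y = kf (pc x) (pc y) + kf (mc x) (mc y)"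
proof -
  have orth: "kf (pc u) (mc v) = 0" "kf (mc u) (pc v) = 0" for u v
    using Kp_Km_orth[OF pc_in mc_in] kf_cnj by (metis complex_cnj_zero)+
  have "kf x y = kf (pc x + mc x) (pc y + mc y)" using pc_mc_sum by metis
  then show ?thesis by (simp add: kf_add_l kf_add_r orth)
qed

lemma kf_eq_hip: "kf x y = hip x (fsym y)"
  unfolding hip_def by (simp add: pc_fsym mc_fsym kf_neg_r kf_decomp[of x y])

lemma kf_fsym: "kf (fsym x) x = hip x x"
  unfolding hip_def by (simp add: pc_fsym mc_fsym kf_neg_l kf_decomp[of "fsym x" x])

lemma knorm_hq: "nm x = sqrt (hq x)"
  unfolding knorm_def hq_def hip_def mcomp_def by simp

lemma Re_kf_pc: "Re (kf (pc x) (pc x)) \<ge> 0"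
  using Kp_pos[of "pc x"] pc_in by (cases "pc x = 0") force+
lemma Re_kf_mc: "Re (kf (mc x) (mc x)) \<le> 0"
  using Km_neg[of "mc x"] mc_in by (cases "mc x = 0") force+

lemma hq_nonneg: "hq x \<ge> 0"
  using Re_kf_pc[of x] Re_kf_mc[of x] unfolding hq_def hip_def by simp

lemma nm_ge0[simp]: "nm x \<ge> 0" unfolding knorm_hq using hq_nonneg[of x] by simp
lemma nm_sq: "(nm x)^2 = hq x" unfolding knorm_hq using hq_nonneg[of x] by simp
lemma nm_0[simp]: "nm 0 = 0" unfolding knorm_hq hq_def hip_def mcomp_def pcomp_def
  using pcomp_char[of 0 0] csub_0[OF sub_Kp] csub_0[OF sub_Km] by (simp add: pcomp_def)

lemma nm_eq0: assumes "nm x = 0" shows "x = 0"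
proof -
  have "hq x = 0" using nm_sq[of x] assms by simp
  then have "Re (kf (pc x) (pc x)) = 0" "Re (kf (mc x) (mc x)) = 0"
    unfolding hq_def hip_def using Re_kf_pc[of x] Re_kf_mc[of x] by auto
  then have "pc x = 0" "mc x = 0" using Kp_pos[of "pc x"] Km_neg[of "mc x"] pc_in mc_in by force+
  then show ?thesis using pc_mc_sum[of x] by simp
qed

lemma nm_sc: "nm (sc a x) = cmod a * nm x"
proof -
  have "hip (sc a x) (sc a x) = (a * cnj a) * hip x x" by (simp add: hip_sc_l hip_sc_r)
  also have "a * cnj a = complex_of_real ((cmod a)^2)" using complex_norm_square[of a] by simp
  finally have "hq (sc a x) = (cmod a)^2 * hq x" unfolding hq_def by simp
  then show ?thesis unfolding knorm_hq by (simp add: real_sqrt_mult)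
qed

lemma nm_neg: "nm (- x) = nm x" using nm_sc[of "-1" x] sc_m1 by simp
lemma nm_diff_sym: "nm (x - y) = nm (y - x)" using nm_neg[of "x - y"] by simp
lemma nm_fsym: "nm (fsym x) = nm x"
  unfolding knorm_hq hq_def hip_def by (simp add: pc_fsym mc_fsym kf_neg_l kf_neg_r)

end

lemma quadratic_nonneg_cs:
  fixes a b s :: real
  assumes a: "a \<ge> 0" and b: "b \<ge> 0" and H: "\<And>r. 0 \<le> a + 2*r*s + r^2*b"
  shows "s \<le> sqrt a * sqrt b"
proof (cases "s \<le> 0")
  case True then show ?thesis using a b by (meson mult_nonneg_nonneg real_sqrt_ge_zero order_trans)
next
  case False
  then have s: "s > 0" by simp
  show ?thesis
  proof (cases "b = 0")
    case True
    have "0 \<le> a + 2*(-(a+1)/(2*s))*s + (-(a+1)/(2*s))^2*b" by (rule H)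
    then have False using True s by (simp add: field_simps)
    then show ?thesis ..
  next
    case False
    then have bp: "b > 0" using b by simp
    have "0 \<le> a + 2*(-s/b)*s + (-s/b)^2*b" by (rule H)
    then have "s^2 \<le> a*b" using bp by (simp add: field_simps power2_eq_square)
    then have "sqrt (s^2) \<le> sqrt (a*b)" by (rule real_sqrt_le_mono)
    then show ?thesis using s by (simp add: real_sqrt_mult)
  qed
qed

context krein
begin

lemma hq_expand: "hq (x + sc (complex_of_real r) y) = hq x + 2*r*Re (hip x y) + r^2 * hq y"
proof -
  have "hip (x + sc (complex_of_real r) y) (x + sc (complex_of_real r) y)
      = hip x x + of_real r * hip x y + of_real r * hip y x + of_real (r^2) * hip y y"
    by (simp add: hip_add_l hip_add_r hip_sc_l hip_sc_r power2_eq_square algebra_simps)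
  moreover have "Re (hip y x) = Re (hip x y)" using hip_cnj[of y x] by simp
  ultimately show ?thesis unfolding hq_def by (simp add: algebra_simps)
qed

lemma cs_Re: "Re (hip x y) \<le> nm x * nm y"
  unfolding knorm_hq
  by (rule quadratic_nonneg_cs[OF hq_nonneg hq_nonneg]) (metis hq_expand hq_nonneg)

text \<open>Cauchy-Schwarz for hip, obtained from the real part by rotating x.\<close>
lemma cs: "cmod (hip x y) \<le> nm x * nm y"
proof (cases "hip x y = 0")
  case True then show ?thesis by simp
next
  case False
  define a where "a = cnj (hip x y) / complex_of_real (cmod (hip x y))"
  have ca: "cmod a = 1" unfolding a_def using False by (simp add: norm_divide)
  have "hip (sc a x) y = complex_of_real (cmod (hip x y))"
    unfolding hip_sc_l a_def using False complex_norm_square[of "hip x y"]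
    by (simp add: power2_eq_square field_simps mult.commute)
  then have "cmod (hip x y) = Re (hip (sc a x) y)" by simp
  also have "\<dots> \<le> nm x * nm y" using cs_Re[of "sc a x" y] ca nm_sc by simp
  finally show ?thesis .
qed

lemma kf_bound: "cmod (kf x y) \<le> nm x * nm y"
  using cs[of x "fsym y"] kf_eq_hip nm_fsym by simp

lemma Re_kf_fsym: "Re (kf (fsym x) x) = (nm x)^2"
  using kf_fsym nm_sq hq_def by simp

lemma nm_triangle: "nm (x + y) \<le> nm x + nm y"
proof -
  have "hq (x + y) = hq x + 2 * Re (hip x y) + hq y" using hq_expand[of x 1 y] by simp
  also have "\<dots> \<le> (nm x + nm y)^2" using cs_Re[of x y] nm_sq by (simp add: power2_eq_square algebra_simps)
  finally have "sqrt (hq (x + y)) \<le> sqrt ((nm x + nm y)^2)" by (rule real_sqrt_le_mono)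
  then show ?thesis unfolding knorm_hq[of "x + y"] by simp
qed

lemma nm_diff_tri: "nm (x - z) \<le> nm (x - y) + nm (y - z)"
  using nm_triangle[of "x - y" "y - z"] by simp
lemma nm_diff_le: "nm (x - y) \<le> nm x + nm y"
  using nm_triangle[of x "-y"] nm_neg by simp
lemma nm_rev_tri: "\<bar>nm x - nm y\<bar> \<le> nm (x - y)"
  using nm_triangle[of "x - y" y] nm_triangle[of "y - x" x] nm_diff_sym[of x y] by auto
lemma nm_sum: "nm (sum f A) \<le> (\<Sum>i\<in>A. nm (f i))"
proof (induction A rule: infinite_finite_induct)
  case (insert a A)
  then show ?case using nm_triangle[of "f a" "sum f A"] by simp
qed auto

lemma nm_pc: "nm (pc x) \<le> nm x"
  using Re_kf_mc[of x] unfolding knorm_hq hq_def hip_def by (simp add: pc_pc mc_pc)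
lemma nm_mc: "nm (mc x) \<le> nm x"
  using Re_kf_pc[of x] unfolding knorm_hq hq_def hip_def by (simp add: pc_mc mc_mc)

end


lemma real_squeeze:
  fixes f g :: "nat \<Rightarrow> real"
  assumes "\<And>n. 0 \<le> g n" "\<And>n. g n \<le> f n" "f \<longlonglongrightarrow> 0"
  shows "g \<longlonglongrightarrow> 0"
proof (rule tendsto_0_le[OF assms(3), where K=1])
  show "\<forall>\<^sub>F x in sequentially. norm (g x) \<le> norm (f x) * 1"
    using assms(1,2) by (auto intro!: always_eventually) (smt (verit))
qed

context krein
begin

abbreviation "kc \<equiv> kconv kf Kp Km"

lemma kc_bound: assumes "\<And>n. nm (Y n - b) \<le> f n" "f \<longlonglongrightarrow> 0" shows "kc Y b"
  unfolding kconv_def using real_squeeze[of "\<lambda>n. nm (Y n - b)" f] assms by simp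

lemma kc_D: "kc X a \<Longrightarrow> (\<lambda>n. nm (X n - a)) \<longlonglongrightarrow> 0" unfolding kconv_def .

lemma kc_const: "kc (\<lambda>n. x) x" by (rule kc_bound[where f="\<lambda>n. 0"]) auto

lemma kc_add: assumes "kc X a" "kc Y b" shows "kc (\<lambda>n. X n + Y n) (a + b)"
proof (rule kc_bound[where f="\<lambda>n. nm (X n - a) + nm (Y n - b)"])
  show "nm (X n + Y n - (a + b)) \<le> nm (X n - a) + nm (Y n - b)" for n
    using nm_triangle[of "X n - a" "Y n - b"] by (simp add: algebra_simps)
  show "(\<lambda>n. nm (X n - a) + nm (Y n - b)) \<longlonglongrightarrow> 0"
    using tendsto_add[OF kc_D[OF assms(1)] kc_D[OF assms(2)]] by simp
qed

lemma kc_sc: assumes "kc X a" shows "kc (\<lambda>n. sc c (X n)) (sc c a)"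
proof (rule kc_bound[where f="\<lambda>n. cmod c * nm (X n - a)"])
  show "nm (sc c (X n) - sc c a) \<le> cmod c * nm (X n - a)" for n
    by (simp add: sc_diff_r[symmetric] nm_sc)
  show "(\<lambda>n. cmod c * nm (X n - a)) \<longlonglongrightarrow> 0"
    using tendsto_mult[OF tendsto_const kc_D[OF assms]] by simp
qed

lemma kc_diff: assumes "kc X a" "kc Y b" shows "kc (\<lambda>n. X n - Y n) (a - b)"
  using kc_add[OF assms(1) kc_sc[OF assms(2), of "-1"]] by (simp add: sc_m1)

lemma kc_unique: assumes "kc X a" "kc X b" shows "a = b"
proof -
  have "(\<lambda>n. nm (X n - a) + nm (X n - b)) \<longlonglongrightarrow> 0"
    using tendsto_add[OF kc_D[OF assms(1)] kc_D[OF assms(2)]] by simp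
  moreover have "\<And>n. nm (a - b) \<le> nm (X n - a) + nm (X n - b)"
    using nm_diff_tri nm_diff_sym by metis
  ultimately have "(\<lambda>n. nm (a - b)) \<longlonglongrightarrow> 0"
    using real_squeeze[of "\<lambda>n. nm (a - b)" "\<lambda>n. nm (X n - a) + nm (X n - b)"] by simp
  then have "nm (a - b) = 0" using LIMSEQ_const_iff by blast
  then show ?thesis using nm_eq0[of "a - b"] by simp
qed

lemma kc_offset: "kc X a \<Longrightarrow> kc (\<lambda>n. X (n + k)) a"
  unfolding kconv_def using LIMSEQ_ignore_initial_segment by fastforce

lemma kc_nm: assumes "kc X a" shows "(\<lambda>n. nm (X n)) \<longlonglongrightarrow> nm a"
proof -
  have "(\<lambda>n. nm (X n) - nm a) \<longlonglongrightarrow> 0"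
  proof (rule tendsto_0_le[OF kc_D[OF assms], where K=1])
    show "\<forall>\<^sub>F x in sequentially. norm (nm (X x) - nm a) \<le> norm (nm (X x - a)) * 1"
      using nm_rev_tri by (auto intro!: always_eventually)
  qed
  then show ?thesis using LIM_zero_iff by blast
qed

lemma kc_nm_le: assumes "kc X a" "\<And>n. nm (X n) \<le> c" shows "nm a \<le> c"
  using LIMSEQ_le_const2[OF kc_nm[OF assms(1)]] assms(2) by blast

lemma kc_kf_r: assumes "kc X a" shows "(\<lambda>n. kf y (X n)) \<longlonglongrightarrow> kf y a"
proof -
  have "(\<lambda>n. kf y (X n) - kf y a) \<longlonglongrightarrow> 0"
  proof (rule tendsto_0_le[OF kc_D[OF assms], where K="nm y"])
    show "\<forall>\<^sub>F x in sequentially. norm (kf y (X x) - kf y a) \<le> norm (nm (X x - a)) * nm y"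
      using kf_bound by (auto intro!: always_eventually simp: kf_diff_r[symmetric] mult.commute)
  qed
  then show ?thesis using LIM_zero_iff by blast
qed

lemma kc_kf_l: assumes "kc X a" shows "(\<lambda>n. kf (X n) y) \<longlonglongrightarrow> kf a y"
  using tendsto_cnj[OF kc_kf_r[OF assms, of y]] by (simp add: kf_cnj[of y])

text \<open>K is complete: a Cauchy sequence splits into Cauchy sequences in Kp and in Km.\<close>
lemma kc_complete: assumes "kcauchy kf Kp Km X" shows "\<exists>l. kc X l"
proof -
  have comp_cauchy: "kcauchy kf Kp Km (\<lambda>n. P (X n))"
    if "\<And>x y. P x - P y = P (x - y)" "\<And>x. nm (P x) \<le> nm x" for P
    unfolding kcauchy_def
  proof (intro allI impI)
    fix e :: real assume "e > 0"
    then obtain N where "\<forall>m\<ge>N. \<forall>n\<ge>N. nm (X m - X n) < e" using assms unfolding kcauchy_def by blast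
    then show "\<exists>N. \<forall>m\<ge>N. \<forall>n\<ge>N. nm (P (X m) - P (X n)) < e"
      using that by (metis order.strict_trans1)
  qed
  obtain lp where lp: "kc (\<lambda>n. pc (X n)) lp"
    using Kp_complete[OF _ comp_cauchy] pc_in pc_diff nm_pc by metis
  obtain lm where lm: "kc (\<lambda>n. mc (X n)) lm"
    using Km_complete[OF _ comp_cauchy] mc_in mc_diff nm_mc by metis
  have "kc (\<lambda>n. pc (X n) + mc (X n)) (lp + lm)" by (rule kc_add[OF lp lm])
  then show ?thesis using pc_mc_sum by auto
qed

lemma kc_series:
  assumes b: "\<And>k. nm (a k) \<le> b k" and sb: "summable b"
  shows "\<exists>l. kc (\<lambda>n. \<Sum>k<n. a k) l \<and> nm l \<le> suminf b"
proof -
  have b0: "\<And>k. 0 \<le> b k" using b nm_ge0 order_trans by blast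
  have tail: "nm ((\<Sum>k<m. a k) - (\<Sum>k<n. a k)) \<le> sum b {n..<m}" if "n \<le> m" for m n
  proof -
    have "(\<Sum>k<m. a k) = (\<Sum>k<n. a k) + sum a {n..<m}"
      using sum.atLeastLessThan_concat[of 0 n m a] that by (simp add: atLeast0LessThan)
    then have "nm ((\<Sum>k<m. a k) - (\<Sum>k<n. a k)) = nm (sum a {n..<m})" by simp
    also have "\<dots> \<le> (\<Sum>k\<in>{n..<m}. nm (a k))" by (rule nm_sum)
    also have "\<dots> \<le> sum b {n..<m}" by (rule sum_mono) (rule b)
    finally show ?thesis .
  qed
  have "kcauchy kf Kp Km (\<lambda>n. \<Sum>k<n. a k)"
    unfolding kcauchy_def
  proof (intro allI impI)
    fix e :: real assume "e > 0"
    then obtain N where N: "\<forall>m\<ge>N. \<forall>n. norm (sum b {m..<n}) < e" using sb summable_Cauchy by blast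
    have small: "sum b {n..<m} < e" if "n \<ge> N" for m n
      using N that b0 by (smt (verit) real_norm_def sum_nonneg)
    have "nm ((\<Sum>k<m. a k) - (\<Sum>k<n. a k)) < e" if "m \<ge> N" "n \<ge> N" for m n
      using tail[of n m] tail[of m n] small[OF that(2), of m] small[OF that(1), of n] nm_diff_sym
      by (cases "n \<le> m") auto
    then show "\<exists>N. \<forall>m\<ge>N. \<forall>n\<ge>N. nm ((\<Sum>k<m. a k) - (\<Sum>k<n. a k)) < e" by blast
  qed
  then obtain l where l: "kc (\<lambda>n. \<Sum>k<n. a k) l" using kc_complete by blast
  have "nm (\<Sum>k<n. a k) \<le> suminf b" for n
  proof -
    have "nm (\<Sum>k<n. a k) \<le> (\<Sum>k<n. nm (a k))" by (rule nm_sum)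
    also have "\<dots> \<le> (\<Sum>k<n. b k)" by (rule sum_mono) (rule b)
    also have "\<dots> \<le> suminf b" using sum_le_suminf[OF sb, of "{..<n}"] b0 by simp
    finally show ?thesis .
  qed
  then show ?thesis using l kc_nm_le by blast
qed

definition lin :: "('a \<Rightarrow> 'a) \<Rightarrow> bool" where
  "lin A \<longleftrightarrow> (\<forall>x y. A (x + y) = A x + A y) \<and> (\<forall>a x. A (sc a x) = sc a (A x))"
definition bnd :: "('a \<Rightarrow> 'a) \<Rightarrow> real \<Rightarrow> bool" where
  "bnd A c \<longleftrightarrow> (\<forall>x. nm (A x) \<le> c * nm x)"

lemma bounded_op_iff: "bounded_op sc kf Kp Km A \<longleftrightarrow> lin A \<and> (\<exists>c. bnd A c)"
  unfolding bounded_op_def lin_def bnd_def by blast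

lemma lin_add: "lin A \<Longrightarrow> A (x + y) = A x + A y" unfolding lin_def by blast
lemma lin_sc: "lin A \<Longrightarrow> A (sc a x) = sc a (A x)" unfolding lin_def by blast
lemma lin_0: "lin A \<Longrightarrow> A 0 = 0" using lin_sc[of A 0 0] by simp
lemma lin_neg: "lin A \<Longrightarrow> A (- x) = - A x" using lin_sc[of A "-1" x] by (simp add: sc_m1)
lemma lin_diff: "lin A \<Longrightarrow> A (x - y) = A x - A y" using lin_add[of A x "-y"] lin_neg by simp
lemma lin_sum: "lin A \<Longrightarrow> A (sum f S) = (\<Sum>i\<in>S. A (f i))"
  by (induction S rule: infinite_finite_induct) (auto simp: lin_0 lin_add)
lemma lin_id: "lin (\<lambda>x. x)" unfolding lin_def by simp
lemma lin_comp: "lin A \<Longrightarrow> lin B \<Longrightarrow> lin (\<lambda>x. A (B x))" unfolding lin_def by simp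
lemma lin_pow: "lin A \<Longrightarrow> lin (A ^^ k)"
  by (induction k) (auto simp: lin_id lin_comp[of A] comp_def id_def)
lemma lin_diffop: "lin A \<Longrightarrow> lin B \<Longrightarrow> lin (\<lambda>x. A x - B x)"
  unfolding lin_def by (simp add: sc_diff_r algebra_simps)
lemma lin_scop: "lin A \<Longrightarrow> lin (\<lambda>x. sc c (A x))"
  unfolding lin_def by (simp add: mult.commute)

lemma bnd_D: "bnd A c \<Longrightarrow> nm (A x) \<le> c * nm x" unfolding bnd_def by blast
lemma bnd_nonneg: "bnd A c \<Longrightarrow> bnd A (max c 0)"
  unfolding bnd_def by (meson max.cobounded1 mult_right_mono nm_ge0 order_trans)
lemma bnd_id: "bnd (\<lambda>x. x) 1" unfolding bnd_def by simp
lemma bnd_comp: "bnd A c \<Longrightarrow> bnd B d \<Longrightarrow> c \<ge> 0 \<Longrightarrow> bnd (\<lambda>x. A (B x)) (c * d)"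
  unfolding bnd_def by (metis (no_types, opaque_lifting) mult.assoc mult_left_mono order_trans)
lemma bnd_pow: "bnd A c \<Longrightarrow> c \<ge> 0 \<Longrightarrow> bnd (A ^^ k) (c ^ k)"
proof (induction k)
  case 0 then show ?case using bnd_id by (simp add: id_def)
next
  case (Suc k)
  then have "bnd (\<lambda>x. A ((A ^^ k) x)) (c * c^k)" using bnd_comp by blast
  then show ?case by simp
qed
lemma bnd_diffop: assumes "bnd A a" "bnd B b" shows "bnd (\<lambda>x. A x - B x) (a + b)"
  unfolding bnd_def
proof
  fix x
  have "nm (A x - B x) \<le> nm (A x) + nm (B x)" by (rule nm_diff_le)
  also have "\<dots> \<le> (a + b) * nm x" using bnd_D[OF assms(1), of x] bnd_D[OF assms(2), of x]
    by (simp add: distrib_right)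
  finally show "nm (A x - B x) \<le> (a + b) * nm x" .
qed
lemma bnd_scop: assumes "bnd A a" shows "bnd (\<lambda>x. sc c (A x)) (cmod c * a)"
  using bnd_D[OF assms] unfolding bnd_def nm_sc by (simp add: mult_left_mono mult.assoc)

definition bnd_const :: "('a \<Rightarrow> 'a) \<Rightarrow> real" where
  "bnd_const A = (SOME c. 0 \<le> c \<and> bnd A c)"

lemma bnd_const_bound: assumes "bnd A c" shows "0 \<le> bnd_const A" "bnd A (bnd_const A)"
proof -
  have "\<exists>c. 0 \<le> c \<and> bnd A c" using bnd_nonneg[OF assms] by (intro exI[of _ "max c 0"]) simp
  then have "0 \<le> bnd_const A \<and> bnd A (bnd_const A)" unfolding bnd_const_def by (rule someI_ex)
  then show "0 \<le> bnd_const A" "bnd A (bnd_const A)" by simp_all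
qed

lemma kc_lin: assumes "lin A" "bnd A c" "kc X a" shows "kc (\<lambda>n. A (X n)) (A a)"
proof (rule kc_bound[where f="\<lambda>n. max c 0 * nm (X n - a)"])
  show "nm (A (X n) - A a) \<le> max c 0 * nm (X n - a)" for n
    using bnd_D[OF bnd_nonneg[OF assms(2)]] lin_diff[OF assms(1)] by metis
  show "(\<lambda>n. max c 0 * nm (X n - a)) \<longlonglongrightarrow> 0"
    using tendsto_mult[OF tendsto_const kc_D[OF assms(3)]] by simp
qed

lemma opnorm_le:
  assumes "\<And>x. nm (X x) \<le> c * nm x" "c \<ge> 0"
  shows "0 \<le> opnorm kf Kp Km X" "opnorm kf Kp Km X \<le> c"
proof -
  define A where "A = {nm (X x) |x. nm x \<le> 1}"
  have ne: "nm (X 0) \<in> A" unfolding A_def by auto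
  have ub: "v \<le> c" if "v \<in> A" for v
  proof -
    obtain x where "v = nm (X x)" "nm x \<le> 1" using \<open>v \<in> A\<close> unfolding A_def by auto
    moreover have "c * nm x \<le> c" using \<open>nm x \<le> 1\<close> assms(2) by (simp add: mult_left_le)
    ultimately show "v \<le> c" using assms(1)[of x] by simp
  qed
  show "opnorm kf Kp Km X \<le> c" unfolding opnorm_def A_def[symmetric]
    by (rule cSup_least) (use ne ub in auto)
  have "nm (X 0) \<le> Sup A" by (rule cSup_upper[OF ne]) (use ub in \<open>intro bdd_aboveI\<close>)
  then show "0 \<le> opnorm kf Kp Km X" unfolding opnorm_def A_def[symmetric] using nm_ge0 order_trans by blast
qed

end

context krein
begin

lemma nested_balls_point:
  assumes nest: "\<And>m n. n \<le> m \<Longrightarrow> nm (x m - x n) \<le> r n" and r: "\<And>n. r n \<le> (1/2)^n"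
  shows "\<exists>z. \<forall>n. nm (z - x n) \<le> r n"
proof -
  have "kcauchy kf Kp Km x"
    unfolding kcauchy_def
  proof (intro allI impI)
    fix e :: real assume e: "e > 0"
    obtain N where N: "(1/2::real)^N < e/2" using real_arch_pow_inv[of "e/2" "1/2"] e by auto
    have "nm (x m - x n) < e" if "m \<ge> N" "n \<ge> N" for m n
    proof -
      have "nm (x m - x n) \<le> nm (x m - x N) + nm (x N - x n)" by (rule nm_diff_tri)
      also have "\<dots> \<le> r N + r N" using nest[OF that(1)] nest[OF that(2)] nm_diff_sym[of "x N" "x n"] by simp
      also have "\<dots> < e" using r[of N] N by simp
      finally show ?thesis .
    qed
    then show "\<exists>N. \<forall>m\<ge>N. \<forall>n\<ge>N. nm (x m - x n) < e" by blast
  qed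
  then obtain z where z: "kc x z" using kc_complete by blast
  have "nm (z - x n) \<le> r n" for n
  proof (rule kc_nm_le)
    show "kc (\<lambda>m. x (m + n) - x n) (z - x n)" using kc_diff[OF kc_offset[OF z] kc_const] .
    show "nm (x (m + n) - x n) \<le> r n" for m using nest by simp
  qed
  then show ?thesis by blast
qed

lemma baire:
  fixes P :: "nat \<Rightarrow> 'a \<Rightarrow> bool"
  assumes H: "\<And>n x r. 0 < r \<Longrightarrow> \<exists>x' r'. 0 < r' \<and> r' \<le> r/2 \<and>
                 (\<forall>z. nm (z - x') \<le> r' \<longrightarrow> nm (z - x) < r \<and> \<not> P n z)"
  shows "\<exists>z. \<forall>n. \<not> P n z"
proof -
  define Q where "Q n xr xr' \<longleftrightarrow> 0 < snd xr' \<and> snd xr' \<le> snd xr/2 \<and>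
       (\<forall>z. nm (z - fst xr') \<le> snd xr' \<longrightarrow> nm (z - fst xr) < snd xr \<and> \<not> P n z)" for n xr xr'
  define f where "f n xr = (SOME xr'. Q n xr xr')" for n xr
  define s where "s = rec_nat (0, 1) f"
  have s0: "s 0 = (0, 1)" and sS: "s (Suc n) = f n (s n)" for n unfolding s_def by simp_all
  have step: "Q n xr (f n xr)" if pos: "0 < snd xr" for n xr
  proof -
    obtain x' r' where "Q n xr (x', r')" using H[OF pos, of "fst xr" n] unfolding Q_def by auto
    then show ?thesis unfolding f_def by (rule someI)
  qed
  have pos: "0 < snd (s n)" for n
  proof (induction n)
    case (Suc n) then show ?case using step[OF Suc] sS unfolding Q_def by simp
  qed (simp add: s0)
  have stp: "Q n (s n) (s (Suc n))" for n using step[OF pos] sS by simp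
  define x where "x n = fst (s n)" for n
  define r where "r n = snd (s n)" for n
  have r: "r n \<le> (1/2)^n" for n
  proof (induction n)
    case (Suc n) then show ?case using stp[of n] unfolding Q_def r_def by simp
  qed (simp add: s0 r_def)
  have nest_step: "nm (z - x (Suc n)) \<le> r (Suc n) \<Longrightarrow> nm (z - x n) < r n \<and> \<not> P n z" for z n
    using stp[of n] unfolding Q_def x_def r_def by simp
  have chain: "nm (z - x (n + k)) \<le> r (n + k) \<Longrightarrow> nm (z - x n) \<le> r n" for z n k
  proof (induction k)
    case (Suc k)
    then have "nm (z - x (n + k)) < r (n + k)" using nest_step[of z "n + k"] by simp
    then show ?case using Suc.IH by simp
  qed simp
  have nest: "nm (x m - x n) \<le> r n" if "n \<le> m" for m n
    using chain[of "x m" n "m - n"] that pos[of m] by (simp add: r_def)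
  obtain z where z: "\<forall>n. nm (z - x n) \<le> r n" using nested_balls_point[OF nest r] by blast
  have "\<not> P n z" for n using nest_step[of z n] z by simp
  then show ?thesis by blast
qed

text \<open>
  First step of the closed graph theorem: by Baire, some level set
  {z. nm (A z) \<le> n} is dense in a ball around some x0.
\<close>
lemma level_set_dense_in_ball:
  "\<exists>n x0 r. 0 < r \<and> (\<forall>y e. nm (y - x0) < r/2 \<longrightarrow> 0 < e \<longrightarrow>
                  (\<exists>z. nm (A z) \<le> real n \<and> nm (z - y) < e))"
proof -
  have "\<not> (\<forall>n x r. 0 < r \<longrightarrow> (\<exists>x' r'. 0 < r' \<and> r' \<le> r/2 \<and>
                 (\<forall>z. nm (z - x') \<le> r' \<longrightarrow> nm (z - x) < r \<and> \<not> nm (A z) \<le> real n)))"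
  proof
    assume "\<forall>n x r. 0 < r \<longrightarrow> (\<exists>x' r'. 0 < r' \<and> r' \<le> r/2 \<and>
                 (\<forall>z. nm (z - x') \<le> r' \<longrightarrow> nm (z - x) < r \<and> \<not> nm (A z) \<le> real n))"
    then obtain z where "\<forall>n. \<not> nm (A z) \<le> real n" using baire[of "\<lambda>n z. nm (A z) \<le> real n"] by blast
    then show False using real_nat_ceiling_ge by blast
  qed
  then obtain n x0 r where r: "0 < r" and H0: "\<And>x' r'. 0 < r' \<Longrightarrow> r' \<le> r/2 \<Longrightarrow>
      \<exists>z. nm (z - x') \<le> r' \<and> \<not> (nm (z - x0) < r \<and> \<not> nm (A z) \<le> real n)"
    by blast
  have "\<exists>z. nm (A z) \<le> real n \<and> nm (z - y) < e" if y: "nm (y - x0) < r/2" and e: "0 < e" for y e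
  proof -
    obtain z where z: "nm (z - y) \<le> min (e/2) (r/2)" "\<not> (nm (z - x0) < r \<and> \<not> nm (A z) \<le> real n)"
      using H0[of "min (e/2) (r/2)" y] r e by (metis half_gt_zero min.cobounded2 min_less_iff_conj)
    have "nm (z - x0) \<le> nm (z - y) + nm (y - x0)" by (rule nm_diff_tri)
    then show ?thesis using z y e by auto
  qed
  then show ?thesis using r by blast
qed

text \<open>
  Second step: for linear A, translating and scaling gives uniform approximability of
  every y with nm y < s \<rho> by points z with nm (A z) \<le> s M.
\<close>
lemma linear_approx_bounded:
  assumes lA: "lin A"
  shows "\<exists>\<rho> M. 0 < \<rho> \<and> (\<forall>s y e. 0 < s \<longrightarrow> nm y < s * \<rho> \<longrightarrow> 0 < e \<longrightarrow>
                 (\<exists>z. nm (A z) \<le> s * M \<and> nm (z - y) < e))"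
proof -
  obtain n x0 r where r: "0 < r" and dense: "\<And>y e. nm (y - x0) < r/2 \<Longrightarrow> 0 < e \<Longrightarrow>
                  \<exists>z. nm (A z) \<le> real n \<and> nm (z - y) < e"
    using level_set_dense_in_ball[of A] by blast
  define \<rho> M where "\<rho> = r/2" and "M = 2 * real n"
  have unit: "\<exists>z. nm (A z) \<le> M \<and> nm (z - y) < e" if y: "nm y < \<rho>" and e: "0 < e" for y e
  proof -
    obtain z1 where z1: "nm (A z1) \<le> real n" "nm (z1 - (x0 + y)) < e/2"
      using dense[of "x0 + y" "e/2"] y e by (auto simp: \<rho>_def)
    obtain z2 where z2: "nm (A z2) \<le> real n" "nm (z2 - x0) < e/2"
      using dense[of x0 "e/2"] e r by auto
    have "nm (A (z1 - z2)) \<le> M"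
      using lin_diff[OF lA, of z1 z2] nm_diff_le[of "A z1" "A z2"] z1(1) z2(1) by (simp add: M_def)
    moreover have "nm ((z1 - z2) - y) < e"
      using nm_diff_le[of "z1 - (x0 + y)" "z2 - x0"] z1(2) z2(2) by (simp add: algebra_simps)
    ultimately show ?thesis by blast
  qed
  have "\<exists>z. nm (A z) \<le> s * M \<and> nm (z - y) < e" if s: "0 < s" and y: "nm y < s * \<rho>" and e: "0 < e" for s y e
  proof -
    define y' where "y' = sc (complex_of_real (1/s)) y"
    have "nm y' < \<rho>" unfolding y'_def nm_sc using s y by (simp add: norm_divide divide_less_eq mult.commute)
    then obtain z' where z': "nm (A z') \<le> M" "nm (z' - y') < e / s" using unit[of y' "e/s"] e s by auto
    define z where "z = sc (complex_of_real s) z'"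
    have "nm (A z) \<le> s * M" unfolding z_def lin_sc[OF lA] nm_sc using z'(1) s by simp
    moreover have "z - y = sc (complex_of_real s) (z' - y')"
      unfolding z_def y'_def sc_diff_r using s by simp
    then have "nm (z - y) < e" using z'(2) s by (simp add: nm_sc field_simps)
    ultimately show ?thesis by blast
  qed
  then show ?thesis using r \<rho>_def by (intro exI[of _ \<rho>] exI[of _ M]) auto
qed

text \<open>
  Third step: for closed A, successive approximation of y by a series \<Sum> Z k with
  nm (A (Z k)) \<le> 2^-k M shows that A is bounded on the ball of radius \<rho>.
\<close>
lemma closed_bounded_on_ball:
  assumes lA: "lin A" and clA: "\<And>X x y. kc X x \<Longrightarrow> kc (\<lambda>n. A (X n)) y \<Longrightarrow> A x = y"
    and rho: "0 < \<rho>"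
    and approx: "\<And>s y e. 0 < s \<Longrightarrow> nm y < s * \<rho> \<Longrightarrow> 0 < e \<Longrightarrow> \<exists>z. nm (A z) \<le> s * M \<and> nm (z - y) < e"
    and y: "nm y < \<rho>"
  shows "nm (A y) \<le> 2 * M"
proof -
  define g where "g k v = (SOME z. nm (A z) \<le> (1/2)^k * M \<and> nm (z - v) < (1/2)^(Suc k) * \<rho>)" for k v
  define Y where "Y = rec_nat y (\<lambda>k v. v - g k v)"
  have gp: "nm (A (g k v)) \<le> (1/2)^k * M \<and> nm (g k v - v) < (1/2)^(Suc k) * \<rho>"
    if "nm v < (1/2)^k * \<rho>" for k v
    unfolding g_def by (rule someI_ex) (use approx[of "(1/2)^k" v "(1/2)^(Suc k) * \<rho>"] that rho in simp)
  have Yb: "nm (Y k) < (1/2)^k * \<rho>" for k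
    by (induction k) (use y gp nm_diff_sym in \<open>auto simp: Y_def\<close>)
  define Z where "Z k = g k (Y k)" for k
  have ZA: "nm (A (Z k)) \<le> M * (1/2)^k" for k using gp[OF Yb[of k]] unfolding Z_def by (simp add: mult.commute)
  have psum: "(\<Sum>i<k. Z i) = y - Y k" for k
    by (induction k) (auto simp: Y_def Z_def)
  have conv: "kc (\<lambda>k. \<Sum>i<k. Z i) y"
  proof (rule kc_bound[where f="\<lambda>k. (1/2)^k * \<rho>"])
    show "nm ((\<Sum>i<k. Z i) - y) \<le> (1/2)^k * \<rho>" for k using psum Yb[of k] nm_neg[of "Y k"] by simp
    show "(\<lambda>k. (1/2::real)^k * \<rho>) \<longlonglongrightarrow> 0"
      by (rule tendsto_mult_left_zero) (rule LIMSEQ_realpow_zero; simp)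
  qed
  have sb: "summable (\<lambda>k. M * (1/2::real)^k)" by (rule summable_mult) (simp add: summable_geometric)
  have sv: "suminf (\<lambda>k. M * (1/2::real)^k) = 2 * M"
    using suminf_mult[of "\<lambda>k. (1/2::real)^k" M] suminf_geometric[of "1/2::real"] by simp
  obtain w where w: "kc (\<lambda>n. \<Sum>k<n. A (Z k)) w" "nm w \<le> 2 * M"
    using kc_series[OF ZA sb] sv by auto
  have "kc (\<lambda>n. A (\<Sum>k<n. Z k)) w" using w(1) by (simp only: lin_sum[OF lA])
  then show ?thesis using clA[OF conv] w(2) by blast
qed

theorem closed_graph:
  assumes lA: "lin A" and clA: "\<And>X x y. kc X x \<Longrightarrow> kc (\<lambda>n. A (X n)) y \<Longrightarrow> A x = y"
  shows "\<exists>c. bnd A c"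
proof -
  obtain \<rho> M where rho: "0 < \<rho>" and approx: "\<And>s y e. 0 < s \<Longrightarrow> nm y < s * \<rho> \<Longrightarrow> 0 < e \<Longrightarrow>
                 \<exists>z. nm (A z) \<le> s * M \<and> nm (z - y) < e"
    using linear_approx_bounded[OF lA] by blast
  note ball = closed_bounded_on_ball[OF lA clA rho approx]
  have "nm (A x) \<le> 4 * M / \<rho> * nm x" for x
  proof (cases "nm x = 0")
    case True
    then have "x = 0" by (rule nm_eq0)
    then show ?thesis using lin_0[OF lA] by simp
  next
    case False
    then have nx: "nm x > 0" using nm_ge0[of x] by linarith
    define t where "t = \<rho> / (2 * nm x)"
    have t: "t > 0" using nx rho by (simp add: t_def)
    have "nm (sc (complex_of_real t) x) = t * nm x" unfolding nm_sc using t by simp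
    also have "\<dots> = \<rho> / 2" unfolding t_def using nx by simp
    finally have "nm (sc (complex_of_real t) x) = \<rho> / 2" .
    then have "t * nm (A x) \<le> 2 * M" using ball[where y="sc (complex_of_real t) x"] rho t
      unfolding lin_sc[OF lA] nm_sc by simp
    then show ?thesis using t nx rho by (simp add: t_def field_simps)
  qed
  then show ?thesis unfolding bnd_def by blast
qed

end

context krein
begin

lemma lop_0: "linear_op sc S \<Longrightarrow> 0 \<in> fst S \<and> snd S 0 = 0"
  unfolding linear_op_def by (metis csub_0 sc_zero_l)

lemma lop_diff:
  assumes "linear_op sc S" "x \<in> fst S" "y \<in> fst S"
  shows "x - y \<in> fst S \<and> snd S (x - y) = snd S x - snd S y"
proof -
  have sub: "csubspace sc (fst S)" using assms(1) unfolding linear_op_def by blast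
  have "snd S (sc (-1) y) = sc (-1) (snd S y)" using assms(1,3) unfolding linear_op_def by blast
  moreover have "snd S (x + sc (-1) y) = snd S x + snd S (sc (-1) y)"
    using assms csub_sc[OF sub] unfolding linear_op_def by blast
  ultimately show ?thesis using csub_diff[OF sub assms(2,3)] by (simp add: sc_m1)
qed

lemma lin_lop_comp:
  assumes a: "linear_op sc S1" and b: "linear_op sc S2"
  shows "linear_op sc (lop_comp S1 S2)"
proof -
  have s1: "csubspace sc (fst S1)" and s2: "csubspace sc (fst S2)" using a b unfolding linear_op_def by auto
  have add: "\<And>x y. x \<in> fst S1 \<Longrightarrow> y \<in> fst S1 \<Longrightarrow> snd S1 (x + y) = snd S1 x + snd S1 y"
              "\<And>x y. x \<in> fst S2 \<Longrightarrow> y \<in> fst S2 \<Longrightarrow> snd S2 (x + y) = snd S2 x + snd S2 y"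
   and hom: "\<And>c x. x \<in> fst S1 \<Longrightarrow> snd S1 (sc c x) = sc c (snd S1 x)"
            "\<And>c x. x \<in> fst S2 \<Longrightarrow> snd S2 (sc c x) = sc c (snd S2 x)"
    using a b unfolding linear_op_def by auto
  show ?thesis unfolding linear_op_def lop_comp_def csubspace_def fst_conv snd_conv
    using lop_0[OF a] lop_0[OF b] add hom csub_add[OF s1] csub_add[OF s2] csub_sc[OF s1] csub_sc[OF s2]
    by auto
qed

lemma shift_linear:
  assumes "linear_op sc S"
  shows "linear_op sc (fst S, shift_op sc S l)"
  using assms unfolding linear_op_def shift_op_def
  by (auto simp: sc_diff_r algebra_simps mult.commute)

lemma inv_lin:
  assumes sub: "csubspace sc Dm" and fa: "\<And>x y. x \<in> Dm \<Longrightarrow> y \<in> Dm \<Longrightarrow> f (x + y) = f x + f y"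
    and fs: "\<And>a x. x \<in> Dm \<Longrightarrow> f (sc a x) = sc a (f x)" and bij: "bij_betw f Dm UNIV"
  shows "lin (inv_into Dm f)"
proof -
  have inj: "inj_on f Dm" and sur: "f ` Dm = UNIV" using bij unfolding bij_betw_def by auto
  have gi: "inv_into Dm f y \<in> Dm" and fg: "f (inv_into Dm f y) = y" for y
    by (rule inv_into_into, simp add: sur) (rule f_inv_into_f, simp add: sur)
  show ?thesis unfolding lin_def
  proof (intro conjI allI)
    fix x y
    have "f (inv_into Dm f x + inv_into Dm f y) = x + y" using fa[OF gi gi] fg by simp
    then show "inv_into Dm f (x + y) = inv_into Dm f x + inv_into Dm f y"
      using inv_into_f_eq[OF inj csub_add[OF sub gi gi]] by blast
  next
    fix a x
    have "f (sc a (inv_into Dm f x)) = sc a x" using fs[OF gi] fg by simp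
    then show "inv_into Dm f (sc a x) = sc a (inv_into Dm f x)"
      using inv_into_f_eq[OF inj csub_sc[OF sub gi]] by blast
  qed
qed

lemma rho_resolvent:
  assumes "l \<in> rho sc kf Kp Km S"
  shows "resolvent sc S l y \<in> fst S" "shift_op sc S l (resolvent sc S l y) = y"
    "x \<in> fst S \<Longrightarrow> resolvent sc S l (shift_op sc S l x) = x"
    "\<exists>c. bnd (resolvent sc S l) c"
proof -
  have bij: "bij_betw (shift_op sc S l) (fst S) UNIV" using assms unfolding rho_def by blast
  then show "resolvent sc S l y \<in> fst S" "shift_op sc S l (resolvent sc S l y) = y"
    unfolding resolvent_def bij_betw_def by (auto intro: inv_into_into f_inv_into_f)
  show "x \<in> fst S \<Longrightarrow> resolvent sc S l (shift_op sc S l x) = x"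
    using bij unfolding resolvent_def bij_betw_def by simp
  show "\<exists>c. bnd (resolvent sc S l) c" using assms unfolding rho_def bnd_def by blast
qed

lemma rho_resolvent_lin:
  assumes "l \<in> rho sc kf Kp Km S" "linear_op sc S"
  shows "lin (resolvent sc S l)"
  using shift_linear[OF assms(2), of l] assms(1)
  unfolding resolvent_def rho_def linear_op_def fst_conv snd_conv
  by (intro inv_lin) auto

lemma rho_intro:
  assumes S: "linear_op sc S"
    and sol: "\<And>y. X y \<in> fst S \<and> shift_op sc S l (X y) = y"
    and ker: "\<And>x. x \<in> fst S \<Longrightarrow> shift_op sc S l x = 0 \<Longrightarrow> x = 0"
    and bound: "bnd X c"
  shows "l \<in> rho sc kf Kp Km S" "resolvent sc S l = X"
proof -
  have inj: "inj_on (shift_op sc S l) (fst S)"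
  proof (rule inj_onI)
    fix x1 x2 assume x: "x1 \<in> fst S" "x2 \<in> fst S" "shift_op sc S l x1 = shift_op sc S l x2"
    then have "shift_op sc S l (x1 - x2) = 0" and "x1 - x2 \<in> fst S"
      using lop_diff[OF shift_linear[OF S, of l]] by auto
    then show "x1 = x2" using ker[of "x1 - x2"] by simp
  qed
  have bij: "bij_betw (shift_op sc S l) (fst S) UNIV"
    unfolding bij_betw_def using inj sol by (metis UNIV_eq_I image_eqI)
  show res: "resolvent sc S l = X"
    unfolding resolvent_def using inv_into_f_eq[OF inj] sol by blast
  show "l \<in> rho sc kf Kp Km S" using bij bound res unfolding rho_def bnd_def by auto
qed

end

locale krein_op = krein sc kf Kp Km
  for sc :: "complex \<Rightarrow> 'a::ab_group_add \<Rightarrow> 'a" and kf Kp Km +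
  fixes T :: "'a lop"
  assumes lin_T: "linear_op sc T" and closed_T: "closed_op kf Kp Km T"
    and dense_T: "kdense kf Kp Km (fst T)"
begin

abbreviation "domT \<equiv> fst T"
abbreviation "appT \<equiv> snd T"
abbreviation "domTa \<equiv> fst (kadj kf T)"
abbreviation "appTa \<equiv> snd (kadj kf T)"

lemma sub_domT: "csubspace sc domT" using lin_T unfolding linear_op_def by blast
lemma appT_add: "x \<in> domT \<Longrightarrow> y \<in> domT \<Longrightarrow> appT (x + y) = appT x + appT y"
  using lin_T unfolding linear_op_def by blast
lemma appT_sc: "x \<in> domT \<Longrightarrow> appT (sc a x) = sc a (appT x)"
  using lin_T unfolding linear_op_def by blast

lemma appT_closed: "(\<And>n. X n \<in> domT) \<Longrightarrow> kc X x \<Longrightarrow> kc (\<lambda>n. appT (X n)) y \<Longrightarrow> x \<in> domT \<and> appT x = y"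
  using closed_T unfolding closed_op_def by blast

text \<open>
  Density of dom T: vectors with the same inner products against dom T coincide
  (test against vectors of dom T approximating J (u - v)).
\<close>
lemma dense_eq: assumes "\<And>x. x \<in> domT \<Longrightarrow> kf x u = kf x v" shows "u = v"
proof -
  obtain X where X: "\<forall>n. X n \<in> domT" "kc X (fsym (u - v))" using dense_T unfolding kdense_def by blast
  have "(\<lambda>n. kf (X n) (u - v)) \<longlonglongrightarrow> kf (fsym (u - v)) (u - v)" by (rule kc_kf_l[OF X(2)])
  moreover have "(\<lambda>n. kf (X n) (u - v)) = (\<lambda>n. 0)" using X(1) assms by (auto simp: kf_diff_r)
  ultimately have "kf (fsym (u - v)) (u - v) = 0" using LIMSEQ_const_iff by metis
  then have "(nm (u - v))^2 = 0" using Re_kf_fsym[of "u - v"] by simp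
  then show ?thesis using nm_eq0[of "u - v"] by simp
qed

lemma adj_eq:
  assumes "\<And>x. x \<in> domT \<Longrightarrow> kf (appT x) y = kf x z"
  shows "y \<in> domTa" "appTa y = z"
proof -
  show "y \<in> domTa" unfolding kadj_def using assms by auto
  have "(THE z. \<forall>x\<in>domT. kf (appT x) y = kf x z) = z"
  proof (rule the_equality)
    show "\<forall>x\<in>domT. kf (appT x) y = kf x z" using assms by blast
    fix z' assume "\<forall>x\<in>domT. kf (appT x) y = kf x z'"
    then show "z' = z" using assms by (intro dense_eq) simp
  qed
  then show "appTa y = z" unfolding kadj_def by simp
qed

lemma adj_prop: assumes "y \<in> domTa" "x \<in> domT" shows "kf (appT x) y = kf x (appTa y)"
proof -
  obtain z where z: "\<forall>x\<in>domT. kf (appT x) y = kf x z" using assms(1) unfolding kadj_def by auto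
  then have "appTa y = z" using adj_eq by blast
  then show ?thesis using z assms(2) by simp
qed

lemma adj_add: assumes "y \<in> domTa" "w \<in> domTa" shows "y + w \<in> domTa \<and> appTa (y + w) = appTa y + appTa w"
  using adj_eq[of "y + w" "appTa y + appTa w"] adj_prop assms by (simp add: kf_add_r)

lemma adj_sc: assumes "y \<in> domTa" shows "sc a y \<in> domTa \<and> appTa (sc a y) = sc a (appTa y)"
  using adj_eq[of "sc a y" "sc a (appTa y)"] adj_prop assms by (simp add: kf_sc_r)

lemma lin_Ta: "linear_op sc (kadj kf T)"
  unfolding linear_op_def csubspace_def using adj_eq[of 0 0] adj_add adj_sc by simp

lemma adj_closed:
  assumes "\<And>n. X n \<in> domTa" "kc X w" "kc (\<lambda>n. appTa (X n)) v"
  shows "w \<in> domTa \<and> appTa w = v"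
proof -
  have "kf (appT x) w = kf x v" if x: "x \<in> domT" for x
  proof -
    have "(\<lambda>n. kf (appT x) (X n)) \<longlonglongrightarrow> kf (appT x) w" by (rule kc_kf_r[OF assms(2)])
    moreover have "(\<lambda>n. kf (appT x) (X n)) = (\<lambda>n. kf x (appTa (X n)))" using adj_prop assms(1) x by auto
    ultimately show ?thesis using kc_kf_r[OF assms(3)] LIMSEQ_unique by metis
  qed
  then show ?thesis using adj_eq by blast
qed

end

context krein
begin

text \<open>
  Neumann series: if nm (A v) \<le> g nm v and |l| g < 1, then w = a + l A w has a solution
  (namely the sum of l^k A^k a) of norm at most nm a / (1 - |l| g).
\<close>
lemma neumann:
  assumes lA: "lin A" and bA: "bnd A g" and g: "0 \<le> g" and q: "cmod l * g < 1"
  shows "\<exists>w. w = a + sc l (A w) \<and> nm w \<le> nm a / (1 - cmod l * g)"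
proof -
  define q where "q = cmod l * g"
  have q0: "0 \<le> q" and q1: "q < 1" using g q by (simp_all add: q_def)
  define f where "f k = sc (l^k) ((A^^k) a)" for k
  define s where "s n = (\<Sum>k<n. f k)" for n
  have tb: "nm (f k) \<le> nm a * q^k" for k
  proof -
    have "nm (f k) = cmod l ^ k * nm ((A^^k) a)" unfolding f_def nm_sc by (simp add: norm_power)
    also have "\<dots> \<le> cmod l ^ k * (g^k * nm a)"
      using bnd_D[OF bnd_pow[OF bA g], of k a] by (simp add: mult_left_mono)
    also have "\<dots> = nm a * q^k" unfolding q_def by (simp add: power_mult_distrib)
    finally show ?thesis .
  qed
  have sb: "summable (\<lambda>k. nm a * q^k)" by (rule summable_mult) (simp add: summable_geometric q0 q1)
  have sv: "suminf (\<lambda>k. nm a * q^k) = nm a / (1 - q)"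
    using suminf_mult[of "\<lambda>k. q^k" "nm a"] suminf_geometric[of q] q0 q1 by simp
  obtain w where w: "kc s w" "nm w \<le> nm a / (1 - q)"
    using kc_series[OF tb sb] sv unfolding s_def by auto
  have rec: "s (Suc n) = a + sc l (A (s n))" for n
  proof -
    have "s (Suc n) = f 0 + (\<Sum>k<n. f (Suc k))" unfolding s_def by (rule sum.lessThan_Suc_shift)
    moreover have "f (Suc k) = sc l (A (f k))" for k unfolding f_def using lin_sc[OF lA] by simp
    ultimately show ?thesis unfolding s_def by (simp add: f_def lin_sum[OF lA] sc_sum)
  qed
  have "kc (\<lambda>n. s (Suc n)) w" using kc_offset[OF w(1), of 1] by simp
  moreover have "kc (\<lambda>n. s (Suc n)) (a + sc l (A w))"
    unfolding rec by (rule kc_add[OF kc_const kc_sc[OF kc_lin[OF lA bA w(1)]]])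
  ultimately have "w = a + sc l (A w)" by (rule kc_unique)
  then show ?thesis using w(2) unfolding q_def by blast
qed

lemma neumann_partial_sum:
  assumes lA: "lin A" and w: "w = a + sc l (A w)"
  shows "(\<Sum>k<N. sc (l^k) ((A^^k) a)) = w - sc (l^N) ((A^^N) w)"
proof (induction N)
  case (Suc N)
  have a: "a = w - sc l (A w)" using w by (metis add_diff_cancel_right')
  have "(A^^N) a = (A^^N) w - sc l ((A^^N) (A w))"
    unfolding a using lin_diff[OF lin_pow[OF lA]] lin_sc[OF lin_pow[OF lA]] by simp
  also have "(A^^N) (A w) = (A^^Suc N) w" by (simp add: funpow_swap1)
  finally have "(A^^N) a = (A^^N) w - sc l ((A^^Suc N) w)" .
  then have "sc (l^N) ((A^^N) a) = sc (l^N) ((A^^N) w) - sc (l^Suc N) ((A^^Suc N) w)"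
    by (simp add: sc_diff_r mult.commute)
  then show ?case using Suc.IH by simp
qed simp

end

locale tt_adjoint_pole = krein_op sc kf Kp Km T
  for sc :: "complex \<Rightarrow> 'a::ab_group_add \<Rightarrow> 'a" and kf Kp Km T +
  fixes \<mu> :: complex
  assumes rho_TaT_0: "0 \<in> rho sc kf Kp Km (lop_comp (kadj kf T) T)"
    and rho_TTa_mu: "\<mu> \<in> rho sc kf Kp Km (lop_comp T (kadj kf T))"
    and spec_TTa_0: "0 \<notin> rho sc kf Kp Km (lop_comp T (kadj kf T))"
begin

abbreviation "TaT \<equiv> lop_comp (kadj kf T) T"
abbreviation "TTa \<equiv> lop_comp T (kadj kf T)"

lemma dom_TaT: "fst TaT = {x \<in> domT. appT x \<in> domTa}" and app_TaT: "snd TaT x = appTa (appT x)"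
  unfolding lop_comp_def by simp_all
lemma dom_TTa: "fst TTa = {x \<in> domTa. appTa x \<in> domT}" and app_TTa: "snd TTa x = appT (appTa x)"
  unfolding lop_comp_def by simp_all
lemma shift_TTa: "shift_op sc TTa l x = appT (appTa x) - sc l x"
  unfolding shift_op_def app_TTa ..
lemma lin_TTa: "linear_op sc TTa" by (rule lin_lop_comp[OF lin_T lin_Ta])

lemma mu_nonzero: "\<mu> \<noteq> 0" using rho_TTa_mu spec_TTa_0 by auto

definition G :: "'a \<Rightarrow> 'a" where "G = resolvent sc TaT 0"
definition R :: "'a \<Rightarrow> 'a" where "R = resolvent sc TTa \<mu>"
definition C :: "'a \<Rightarrow> 'a" where "C y = appT (G y)"
definition D :: "'a \<Rightarrow> 'a" where "D y = appTa (R y)"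

lemma G_in: "G y \<in> domT" "appT (G y) \<in> domTa" "appTa (appT (G y)) = y"
  using rho_resolvent(1,2)[OF rho_TaT_0, of y] unfolding G_def dom_TaT shift_op_def app_TaT by auto
lemma G_inv: "x \<in> domT \<Longrightarrow> appT x \<in> domTa \<Longrightarrow> G (appTa (appT x)) = x"
  using rho_resolvent(3)[OF rho_TaT_0, of x] unfolding G_def dom_TaT shift_op_def app_TaT by auto
lemma R_in: "R y \<in> domTa" "appTa (R y) \<in> domT" "appT (appTa (R y)) - sc \<mu> (R y) = y"
  using rho_resolvent(1,2)[OF rho_TTa_mu, of y] unfolding R_def dom_TTa shift_op_def app_TTa by auto
lemma R_inv: "x \<in> domTa \<Longrightarrow> appTa x \<in> domT \<Longrightarrow> R (appT (appTa x) - sc \<mu> x) = x"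
  using rho_resolvent(3)[OF rho_TTa_mu, of x] unfolding R_def dom_TTa shift_op_def app_TTa by auto

lemma lin_G: "lin G" unfolding G_def by (rule rho_resolvent_lin[OF rho_TaT_0 lin_lop_comp[OF lin_Ta lin_T]])
lemma lin_R: "lin R" unfolding R_def by (rule rho_resolvent_lin[OF rho_TTa_mu lin_TTa])

abbreviation "nG \<equiv> bnd_const G"
abbreviation "nR \<equiv> bnd_const R"
abbreviation "nC \<equiv> bnd_const C"
abbreviation "nD \<equiv> bnd_const D"

lemma G_bnd: "0 \<le> nG" "bnd G nG"
  using bnd_const_bound rho_resolvent(4)[OF rho_TaT_0] unfolding G_def by blast+
lemma R_bnd: "0 \<le> nR" "bnd R nR"
  using bnd_const_bound rho_resolvent(4)[OF rho_TTa_mu] unfolding R_def by blast+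

lemma lin_C: "lin C"
  unfolding lin_def C_def using appT_add[OF G_in(1) G_in(1)] appT_sc[OF G_in(1)] lin_add[OF lin_G] lin_sc[OF lin_G]
  by simp
lemma lin_D: "lin D"
  unfolding lin_def D_def using adj_add[OF R_in(1) R_in(1)] adj_sc[OF R_in(1)] lin_add[OF lin_R] lin_sc[OF lin_R]
  by simp

text \<open>C = T G is closed (T closed, G bounded), hence bounded by the closed graph theorem.\<close>
lemma C_bnd: "0 \<le> nC" "bnd C nC"
proof -
  have "\<exists>c. bnd C c"
  proof (rule closed_graph[OF lin_C])
    fix X x y assume "kc X x" "kc (\<lambda>n. C (X n)) y"
    then show "C x = y" unfolding C_def using appT_closed[OF G_in(1) kc_lin[OF lin_G G_bnd(2)]] by blast
  qed
  then show "0 \<le> nC" "bnd C nC" using bnd_const_bound by blast+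
qed

text \<open>Likewise D = T^[*] R is bounded, since the Krein adjoint is closed.\<close>
lemma D_bnd: "0 \<le> nD" "bnd D nD"
proof -
  have "\<exists>c. bnd D c"
  proof (rule closed_graph[OF lin_D])
    fix X x y assume "kc X x" "kc (\<lambda>n. D (X n)) y"
    then show "D x = y" unfolding D_def using adj_closed[OF R_in(1) kc_lin[OF lin_R R_bnd(2)]] by blast
  qed
  then show "0 \<le> nD" "bnd D nD" using bnd_const_bound by blast+
qed

lemma D_in: "D y \<in> domT" unfolding D_def using R_in(2) .
lemma appT_D: "appT (D y) = y + sc \<mu> (R y)" unfolding D_def using R_in(3)[of y] by (simp add: diff_eq_eq)

end


context tt_adjoint_pole
begin

text \<open>
  For |l| nG < 1, W l y = (I - l G)^{-1} D y is given by the Neumann series, and Xres l y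
  is the candidate for (TT^[*] - l)^{-1} y built from it.
\<close>

definition W :: "complex \<Rightarrow> 'a \<Rightarrow> 'a" where
  "W l y = (SOME w. w = D y + sc l (G w) \<and> nm w \<le> nm (D y) / (1 - cmod l * nG))"

lemma W_neumann: assumes "cmod l * nG < 1"
  shows "W l y = D y + sc l (G (W l y))" "nm (W l y) \<le> nm (D y) / (1 - cmod l * nG)"
  using someI_ex[OF neumann[OF lin_G G_bnd(2) G_bnd(1) assms, of "D y"]] unfolding W_def by auto

definition Xres :: "complex \<Rightarrow> 'a \<Rightarrow> 'a" where
  "Xres l y = sc (inverse l) (sc \<mu> (R y) + sc (l - \<mu>) (C (W l y)))"

text \<open>
  If w = D y + l G w, then x = l^{-1} (\<mu> R y + (l - \<mu>) C w) solves (TT^[*] - l) x = y: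
  with u = D y + (l - \<mu>) G w one checks [T z, l x] = [z, l u] for z in dom T, so
  x \<in> dom T^[*] with T^[*] x = u, and T u - y = l x.
\<close>
lemma resolvent_formula_solves:
  assumes l: "l \<noteq> 0" and w: "w = D y + sc l (G w)"
  shows "sc (inverse l) (sc \<mu> (R y) + sc (l - \<mu>) (C w)) \<in> fst TTa"
    and "shift_op sc TTa l (sc (inverse l) (sc \<mu> (R y) + sc (l - \<mu>) (C w))) = y"
proof -
  define v where "v = sc \<mu> (R y) + sc (l - \<mu>) (C w)"
  define u where "u = D y + sc (l - \<mu>) (G w)"
  define x where "x = sc (inverse l) v"
  have Gw: "sc (l - \<mu>) (G w) \<in> domT" using csub_sc[OF sub_domT G_in(1)] .
  have u_dom: "u \<in> domT" unfolding u_def using csub_add[OF sub_domT D_in Gw] .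
  have Tu: "appT u - y = v"
    unfolding u_def v_def C_def using appT_add[OF D_in Gw] appT_sc[OF G_in(1)] appT_D
    by (simp add: add.assoc)
  have lx: "sc l x = v" unfolding x_def using l by (simp del: sc_add_r)
  have lu: "sc \<mu> (D y) + sc (l - \<mu>) w = sc l u"
  proof -
    have "sc (l - \<mu>) w = sc (l - \<mu>) (D y) + sc (l * (l - \<mu>)) (G w)"
      using arg_cong[OF w, of "sc (l - \<mu>)"] by (simp add: mult.commute)
    moreover have "sc \<mu> (D y) + sc (l - \<mu>) (D y) = sc l (D y)" using sc_add_l[of \<mu> "l - \<mu>"] by simp
    ultimately show ?thesis unfolding u_def by (simp add: add.assoc[symmetric])
  qed
  have weak: "kf (appT z) v = kf z (sc l u)" if z: "z \<in> domT" for z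
  proof -
    have "kf (appT z) (sc \<mu> (R y)) = kf z (sc \<mu> (D y))"
      using adj_prop[OF R_in(1) z] unfolding D_def by (simp add: kf_sc_r)
    moreover have "kf (appT z) (sc (l - \<mu>) (C w)) = kf z (sc (l - \<mu>) w)"
      using adj_prop[OF G_in(2) z] G_in(3) unfolding C_def by (simp add: kf_sc_r)
    ultimately show ?thesis unfolding v_def lu[symmetric] kf_add_r by simp
  qed
  have "kf (appT z) x = kf z u" if "z \<in> domT" for z
  proof -
    have "kf (appT z) x = cnj (inverse l) * kf (appT z) v" unfolding x_def by (rule kf_sc_r)
    also have "\<dots> = (cnj (inverse l) * cnj l) * kf z u" using weak[OF that] by (simp add: kf_sc_r)
    also have "cnj (inverse l) * cnj l = 1" using l by (metis complex_cnj_mult complex_cnj_one left_inverse)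
    finally show ?thesis by simp
  qed
  then have x: "x \<in> domTa" "appTa x = u" using adj_eq by auto
  then show "sc (inverse l) (sc \<mu> (R y) + sc (l - \<mu>) (C w)) \<in> fst TTa"
    using u_dom dom_TTa unfolding x_def v_def by simp
  show "shift_op sc TTa l (sc (inverse l) (sc \<mu> (R y) + sc (l - \<mu>) (C w))) = y"
    using x Tu lx unfolding shift_TTa x_def[symmetric] v_def[symmetric] by (simp add: diff_eq_eq)
qed

text \<open>For 0 < |l| < 1/nG the operator TT^[*] - l is injective: T^[*] x = l G T^[*] x.\<close>
lemma TTa_shift_injective:
  assumes l: "l \<noteq> 0" "cmod l * nG < 1" and x: "x \<in> fst TTa" and e: "shift_op sc TTa l x = 0"
  shows "x = 0"
proof -
  define u where "u = appTa x"
  have x_dom: "x \<in> domTa" and u_dom: "u \<in> domT" using x dom_TTa u_def by auto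
  have Tu: "appT u = sc l x" using e u_def unfolding shift_TTa by simp
  have "appT u \<in> domTa" "appTa (appT u) = sc l u" using adj_sc[OF x_dom, of l] Tu u_def by simp_all
  then have "G (sc l u) = u" using G_inv[OF u_dom] by simp
  then have "u = sc l (G u)" using lin_sc[OF lin_G] by simp
  then have "nm u = cmod l * nm (G u)" using nm_sc by metis
  also have "\<dots> \<le> cmod l * (nG * nm u)" using bnd_D[OF G_bnd(2)] by (simp add: mult_left_mono)
  finally have "(1 - cmod l * nG) * nm u \<le> 0" by (simp add: algebra_simps)
  then have "nm u = 0" using l(2) nm_ge0[of u] by (simp add: mult_le_0_iff)
  then have "u = 0" by (rule nm_eq0)
  then have "sc l x = 0" using Tu lop_0[OF lin_T] by simp
  then show ?thesis using sc_eq0 l(1) by blast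
qed

definition E :: "'a \<Rightarrow> 'a" where "E v = v - sc \<mu> (G v)"
definition residue :: "'a \<Rightarrow> 'a" where "residue y = sc \<mu> (R y - C (D y))"
definition coeff :: "nat \<Rightarrow> 'a \<Rightarrow> 'a" where "coeff k y = C ((G^^k) (E (D y)))"

lemma lin_E: "lin E" unfolding E_def[abs_def] by (rule lin_diffop[OF lin_id lin_scop[OF lin_G]])
lemma bnd_E: "bnd E (1 + cmod \<mu> * nG)"
  unfolding E_def[abs_def] by (rule bnd_diffop[OF bnd_id bnd_scop[OF G_bnd(2)]])

lemma E_funpow_G: "E ((G^^k) v) = (G^^k) (E v)"
  unfolding E_def using lin_diff[OF lin_pow[OF lin_G]] lin_sc[OF lin_pow[OF lin_G]]
  by (simp add: funpow_swap1)

lemma residue_bounded: "bounded_op sc kf Kp Km residue"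
  unfolding bounded_op_iff residue_def[abs_def]
  using lin_scop[OF lin_diffop[OF lin_R lin_comp[OF lin_C lin_D]]]
    bnd_scop[OF bnd_diffop[OF R_bnd(2) bnd_comp[OF C_bnd(2) D_bnd(2) C_bnd(1)]]] by blast

lemma coeff_bnd: "bnd (coeff k) (nC * (nG^k * ((1 + cmod \<mu> * nG) * nD)))"
  unfolding coeff_def[abs_def] using G_bnd(1) C_bnd(1)
  by (intro bnd_comp[OF C_bnd(2) bnd_comp[OF bnd_pow[OF G_bnd(2)] bnd_comp[OF bnd_E D_bnd(2)]]]) simp_all

lemma coeff_bounded: "bounded_op sc kf Kp Km (coeff k)"
proof -
  have "lin (coeff k)" unfolding coeff_def[abs_def]
    by (rule lin_comp[OF lin_C lin_comp[OF lin_pow[OF lin_G] lin_comp[OF lin_E lin_D]]])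
  then show ?thesis unfolding bounded_op_iff using coeff_bnd by blast
qed

lemma principal_part:
  assumes l: "l \<noteq> 0" and w: "w = D y + sc l (G w)"
  shows "sc (inverse l) (sc \<mu> (R y) + sc (l - \<mu>) (C w)) - sc (inverse l) (residue y) = C (E w)"
proof -
  have CD: "C (D y) = C w - sc l (C (G w))"
    using w lin_diff[OF lin_C] lin_sc[OF lin_C] by (metis add_diff_cancel_right')
  have c1: "sc (inverse l * (l - \<mu>)) (C w) + sc (inverse l * \<mu>) (C w) = C w"
    using sc_add_l[of "inverse l * (l - \<mu>)" "inverse l * \<mu>" "C w"] l by (simp add: field_simps)
  have c2: "inverse l * (\<mu> * l) = \<mu>" using l by simp
  have "sc (inverse l) (sc \<mu> (R y) + sc (l - \<mu>) (C w)) - sc (inverse l) (residue y)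
      = sc (inverse l * (l - \<mu>)) (C w) + sc (inverse l * \<mu>) (C w) - sc (inverse l * (\<mu> * l)) (C (G w))"
    unfolding residue_def CD by (simp add: sc_diff_r algebra_simps)
  also have "\<dots> = C (E w)" unfolding c1 c2 E_def using lin_diff[OF lin_C] lin_sc[OF lin_C] by simp
  finally show ?thesis .
qed

lemma laurent_remainder:
  assumes l: "l \<noteq> 0" and w: "w = D y + sc l (G w)"
  shows "sc (inverse l) (sc \<mu> (R y) + sc (l - \<mu>) (C w))
           - (sc (inverse l) (residue y) + (\<Sum>k<N. sc (l^k) (coeff k y)))
         = sc (l^N) (C ((G^^N) (E w)))"
proof -
  have lCE: "lin (\<lambda>v. C (E v))" by (rule lin_comp[OF lin_C lin_E])
  have "C (E w) = C (E (\<Sum>k<N. sc (l^k) ((G^^k) (D y)))) + sc (l^N) (C (E ((G^^N) w)))"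
    using neumann_partial_sum[OF lin_G w, of N] lin_add[OF lCE] lin_sc[OF lCE]
    by (metis diff_add_cancel)
  also have "C (E (\<Sum>k<N. sc (l^k) ((G^^k) (D y)))) = (\<Sum>k<N. sc (l^k) (coeff k y))"
    unfolding coeff_def lin_sum[OF lCE] lin_sc[OF lCE] E_funpow_G ..
  finally show ?thesis using principal_part[OF l w] E_funpow_G by (simp add: algebra_simps)
qed

lemma laurent_remainder_bound:
  assumes l: "l \<noteq> 0" "cmod l * nG < 1"
  shows "nm (Xres l y - (sc (inverse l) (residue y) + (\<Sum>k<N. sc (l^k) (coeff k y))))
           \<le> (nC * (1 + cmod \<mu> * nG) * nD / (1 - cmod l * nG)) * (cmod l * nG)^N * nm y"
proof -
  define w where "w = W l y"
  have q: "0 < 1 - cmod l * nG" using l(2) by simp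
  have nw: "nm w \<le> nD * nm y / (1 - cmod l * nG)"
    using W_neumann(2)[OF l(2), of y] bnd_D[OF D_bnd(2), of y] q unfolding w_def
    by (smt (verit) divide_right_mono)
  have "bnd (\<lambda>v. C ((G^^N) (E v))) (nC * (nG^N * (1 + cmod \<mu> * nG)))"
    using G_bnd(1) C_bnd(1)
    by (intro bnd_comp[OF C_bnd(2) bnd_comp[OF bnd_pow[OF G_bnd(2)] bnd_E]]) simp_all
  then have "nm (sc (l^N) (C ((G^^N) (E w)))) \<le> cmod l ^ N * (nC * (nG^N * (1 + cmod \<mu> * nG)) * nm w)"
    unfolding nm_sc norm_power by (intro mult_left_mono bnd_D) simp_all
  also have "\<dots> \<le> cmod l ^ N * (nC * (nG^N * (1 + cmod \<mu> * nG)) * (nD * nm y / (1 - cmod l * nG)))"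
    using nw G_bnd(1) C_bnd(1) by (intro mult_left_mono) simp_all
  also have "\<dots> = (nC * (1 + cmod \<mu> * nG) * nD / (1 - cmod l * nG)) * (cmod l * nG)^N * nm y"
    by (simp add: power_mult_distrib field_simps)
  finally show ?thesis
    using laurent_remainder[OF l(1) W_neumann(1)[OF l(2)], of y N] unfolding Xres_def w_def by simp
qed

lemma rho_near_zero:
  assumes l: "l \<noteq> 0" "cmod l * nG < 1"
  shows "l \<in> rho sc kf Kp Km TTa" "resolvent sc TTa l = Xres l"
proof -
  define K where "K = nC * (1 + cmod \<mu> * nG) * nD / (1 - cmod l * nG)"
  obtain cres where cres: "bnd residue cres" using residue_bounded bounded_op_iff by blast
  have "nm (Xres l y) \<le> (cmod (inverse l) * cres + K) * nm y" for y
  proof -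
    have "nm (Xres l y - sc (inverse l) (residue y)) \<le> K * nm y"
      using laurent_remainder_bound[OF l, of y 0] unfolding K_def by simp
    moreover have "nm (sc (inverse l) (residue y)) \<le> cmod (inverse l) * cres * nm y"
      using bnd_D[OF bnd_scop[OF cres], of "inverse l" y] by simp
    ultimately show ?thesis
      using nm_triangle[of "Xres l y - sc (inverse l) (residue y)" "sc (inverse l) (residue y)"]
      by (simp add: algebra_simps)
  qed
  then have "bnd (Xres l) (cmod (inverse l) * cres + K)" unfolding bnd_def by blast
  note intro = rho_intro[OF lin_TTa _ TTa_shift_injective[OF l] this]
  show "l \<in> rho sc kf Kp Km TTa" "resolvent sc TTa l = Xres l"
    using intro resolvent_formula_solves[OF l(1) W_neumann(1)[OF l(2)]] unfolding Xres_def by auto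
qed

text \<open>If A_{-1} = 0, then TT^[*] is injective: T^[*] x = 0 and R x = -\<mu>^{-1} x.\<close>
lemma TTa_injective_if_no_residue:
  assumes x: "x \<in> fst TTa" and e: "shift_op sc TTa 0 x = 0" and res: "residue = (\<lambda>_. 0)"
  shows "x = 0"
proof -
  have x_dom: "x \<in> domTa" "appTa x \<in> domT" and Tx: "appT (appTa x) = 0"
    using x e dom_TTa unfolding shift_TTa by auto
  have "appTa x = 0" using G_inv[OF x_dom(2)] Tx adj_eq[of 0 0] lin_0[OF lin_G] by simp
  have Rx: "- sc \<mu> (R x) = x"
    using R_inv[OF x_dom] Tx lin_neg[OF lin_R] lin_sc[OF lin_R] by simp
  have "sc (- inverse \<mu>) x = sc (- inverse \<mu>) (- sc \<mu> (R x))" using Rx[symmetric] by (rule arg_cong)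
  then have "R x = sc (- inverse \<mu>) x" using mu_nonzero by (simp add: sc_neg_r sc_neg_l)
  then have "D x = 0" unfolding D_def using adj_sc[OF x_dom(1), of "- inverse \<mu>"] \<open>appTa x = 0\<close> by simp
  moreover have "residue x = 0" using res by simp
  ultimately have "sc \<mu> (R x) = 0" unfolding residue_def using lin_0[OF lin_C] by simp
  then show ?thesis using Rx by simp
qed

text \<open>A_{-1} \<noteq> 0: otherwise A_0 would be a bounded inverse of TT^[*], i.e. 0 \<in> rho(TT^[*]).\<close>
lemma residue_nonzero: "residue \<noteq> (\<lambda>_. 0)"
proof
  assume res: "residue = (\<lambda>_. 0)"
  have "coeff 0 y \<in> fst TTa \<and> shift_op sc TTa 0 (coeff 0 y) = y" for y
  proof -
    define v where "v = E (D y)"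
    have GD: "G (D y) \<in> domT" by (rule G_in(1))
    have v_dom: "v \<in> domT" unfolding v_def E_def using csub_diff[OF sub_domT D_in csub_sc[OF sub_domT GD]] .
    have "appT v = y + residue y"
      unfolding v_def E_def residue_def C_def
      using lop_diff[OF lin_T D_in csub_sc[OF sub_domT GD]] appT_sc[OF GD] appT_D
      by (simp add: sc_diff_r)
    then have "appT v = y" using res by simp
    then show ?thesis unfolding coeff_def C_def shift_TTa dom_TTa
      using G_in[of v] v_dom by (simp add: v_def)
  qed
  then have "0 \<in> rho sc kf Kp Km TTa"
    using rho_intro(1)[OF lin_TTa _ TTa_injective_if_no_residue[OF _ _ res] coeff_bnd[of 0]] by blast
  then show False using spec_TTa_0 by simp
qed

theorem pole_at_zero: "pole_order_one sc kf Kp Km TTa 0"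
  unfolding pole_order_one_def
proof (intro exI conjI allI impI)
  define A where "A = (\<lambda>n::int. if n = -1 then residue else coeff (nat n))"
  show "0 < 1 / (nG + 1)" using G_bnd(1) by simp
  show "bounded_op sc kf Kp Km (A n)" for n
    unfolding A_def using residue_bounded coeff_bounded by simp
  show "A (-1) \<noteq> (\<lambda>_. 0)" unfolding A_def using residue_nonzero by simp
  fix l assume "0 < cmod (l - 0) \<and> cmod (l - 0) < 1 / (nG + 1)"
  then have l: "l \<noteq> 0" "cmod l * nG < 1" using G_bnd(1)
    by (auto simp: field_simps) (smt (verit) mult_left_mono norm_ge_zero)
  show "l \<in> rho sc kf Kp Km TTa" by (rule rho_near_zero(1)[OF l])
  define q where "q = cmod l * nG"
  define K where "K = nC * (1 + cmod \<mu> * nG) * nD / (1 - q)"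
  have q: "0 \<le> q" "q < 1" and K: "0 \<le> K"
    using l G_bnd(1) C_bnd(1) D_bnd(1) unfolding q_def K_def by simp_all
  let ?F = "\<lambda>N y. resolvent sc TTa l y - (sc (inverse (l - 0)) (A (-1) y)
                   + (\<Sum>k<N. sc ((l - 0) ^ k) (A (int k) y)))"
  have bound: "\<And>y. nm (?F N y) \<le> (K * q^N) * nm y" for N
    using laurent_remainder_bound[OF l] unfolding rho_near_zero(2)[OF l] A_def K_def q_def
    by simp
  have ub: "opnorm kf Kp Km (?F N) \<le> K * q^N" and lb: "0 \<le> opnorm kf Kp Km (?F N)" for N
    using opnorm_le[OF bound] K q(1) by simp_all
  have "(\<lambda>N. K * q^N) \<longlonglongrightarrow> 0"
    by (rule tendsto_mult_right_zero) (rule LIMSEQ_power_zero; use q in simp)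
  then show "(\<lambda>N. opnorm kf Kp Km (?F N)) \<longlonglongrightarrow> 0" by (rule real_squeeze[OF lb ub])
qed

end

theorem corollary2p4:
  fixes sc :: "complex \<Rightarrow> 'a::ab_group_add \<Rightarrow> 'a"
    and kf :: "'a \<Rightarrow> 'a \<Rightarrow> complex"
    and Kp Km :: "'a set"
    and T :: "'a lop"
  assumes "krein_space sc kf Kp Km"
    and "linear_op sc T"
    and "closed_op kf Kp Km T"
    and "kdense kf Kp Km (fst T)"
    and "rho sc kf Kp Km (lop_comp (kadj kf T) T) \<noteq> {}"
    and "rho sc kf Kp Km (lop_comp T (kadj kf T)) \<noteq> {}"
    and "0 \<in> rho sc kf Kp Km (lop_comp (kadj kf T) T)"
    and "0 \<in> spec sc kf Kp Km (lop_comp T (kadj kf T))"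
  shows "pole_order_one sc kf Kp Km (lop_comp T (kadj kf T)) 0"
proof -
  obtain \<mu> where "\<mu> \<in> rho sc kf Kp Km (lop_comp T (kadj kf T))" using assms(6) by blast
  moreover have "0 \<notin> rho sc kf Kp Km (lop_comp T (kadj kf T))" using assms(8) unfolding spec_def by simp
  ultimately interpret tt_adjoint_pole sc kf Kp Km T \<mu>
    using assms(1-4,7) by unfold_locales
  show ?thesis by (rule pole_at_zero)
qed

end
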